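(* Let $f_0$ be a positive integer. There exists a toric line arrangement in $\mathbb{T}^2$ consisting of exactly $3$ lines with $f_0$ vertices and $f_2=2f_0$ chambers if and only if $f_0$ is odd.
   Context: Let $\mathbb{T}^2=\mathbb{R}^2/\mathbb{Z}^2$ with quotient map $\pi:\mathbb{R}^2\to\mathbb{T}^2$. A toric line is the image $\pi(L)$ of a line $L=\{(x,y)\in\mathbb{R}^2: ax+by=c\}$ with $a,b\in\mathbb{Z}$ coprime and $c\in\mathbb{R}$; it is said to be of type $(a,b)$. A toric line arrangement is a finite set $\mathcal{A}=\{l_1,\dots,l_n\}$ of distinct toric lines which is essential, i.e. not all of its lines are of the same type (not all lines are parallel). The vertices of $\mathcal{A}$ are the points of $\mathbb{T}^2$ lying on at least two lines of $\mathcal{A}$; the chambers are the connected components of $\mathbb{T}^2\setminus\bigcup_i l_i$. We write $f_0$ and $f_2$ for the numbers of vertices and chambers. *)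

theory Defs
  imports "HOL-Analysis.Analysis"
begin

text \<open>The torus R^2/Z^2 is realised as the image of the covering map
  (x,y) maps to (exp(2 pi i x), exp(2 pi i y)) in C x C; this image with the subspace
  topology is homeomorphic to the quotient R^2/Z^2.\<close>

definition torus_map :: "real \<times> real \<Rightarrow> complex \<times> complex" where
  "torus_map = (\<lambda>(x, y). (cis (2 * pi * x), cis (2 * pi * y)))"

definition torus :: "(complex \<times> complex) set" where
  "torus = range torus_map"

definition toric_line_of_type :: "(complex \<times> complex) set \<Rightarrow> int \<Rightarrow> int \<Rightarrow> bool" where
  "toric_line_of_type l a b \<longleftrightarrow> coprime a b \<and>
     (\<exists>c::real. l = torus_map ` {(x, y). real_of_int a * x + real_of_int b * y = c})"

definition toric_line :: "(complex \<times> complex) set \<Rightarrow> bool" where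
  "toric_line l \<longleftrightarrow> (\<exists>a b. toric_line_of_type l a b)"

definition toric_arrangement :: "(complex \<times> complex) set set \<Rightarrow> bool" where
  "toric_arrangement A \<longleftrightarrow> finite A \<and> (\<forall>l\<in>A. toric_line l) \<and>
     \<not> (\<exists>a b. \<forall>l\<in>A. toric_line_of_type l a b)"

definition arr_vertices :: "(complex \<times> complex) set set \<Rightarrow> (complex \<times> complex) set" where
  "arr_vertices A = {p \<in> torus. 2 \<le> card {l \<in> A. p \<in> l}}"

definition arr_chambers :: "(complex \<times> complex) set set \<Rightarrow> (complex \<times> complex) set set" where
  "arr_chambers A = components (torus - \<Union>A)"

end

theory Submission
  imports Defs
begin

text \<open>
  Lift the three lines to the plane; if two of them are not parallel, the lifts cut the plane into
  convex cells on which the three affine forms have fixed integer parts. Integer translations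
  permute the cells, and every chamber is the image of a cell. A cell is tagged by a vertex: the
  corner of its parallelogram in \<open>L1 \<inter> L2\<close> if the third family does not cut that parallelogram,
  and otherwise the uphill end of its lower edge on \<open>L3\<close>, a point of \<open>L3 \<inter> (L1 \<union> L2)\<close>. Cells
  with equal tags differ by a translation, so \<open>f2 \<le> |L1 \<inter> L2| + |L3 \<inter> (L1 \<union> L2)| \<le> 2 f0\<close>.

  Equality forces every vertex to be a triple point. Then the lattices on which any two of the
  three linear forms are integral coincide, which yields \<open>(a3, b3) = \<plusminus>(a1, b1) \<plusminus> (a2, b2)\<close>;
  with this parity relation the point reflection in one vertex is an involution of the vertex set
  with exactly one fixed point, so \<open>f0\<close> is odd.

  Conversely, for odd \<open>n\<close> the lines \<open>y = 0\<close>, \<open>nx + y = 0\<close> and \<open>nx + 2y = 0\<close> meet pairwise exactly in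
  the \<open>n\<close> points \<open>(k/n, 0)\<close>, and a locally constant map on their complement taking \<open>2n\<close> values
  shows that there are \<open>2n\<close> chambers.
\<close>

lemma Ints_add_left_iff: "(x::real) \<in> \<int> \<Longrightarrow> x + y \<in> \<int> \<longleftrightarrow> y \<in> \<int>"
  by (metis Ints_add Ints_diff add_diff_cancel_left')

lemma not_Ints_between: "of_int k < x \<Longrightarrow> x < of_int k + 1 \<Longrightarrow> (x::real) \<notin> \<int>"
proof
  assume "of_int k < x" "x < of_int k + 1" "x \<in> \<int>"
  then obtain m where "x = of_int m" "of_int k < x" "x < of_int k + 1" by (auto elim: Ints_cases)
  then show False by simp
qed

lemma not_Ints_floor_bounds: "x \<notin> \<int> \<Longrightarrow> of_int \<lfloor>x\<rfloor> < x \<and> x < of_int \<lfloor>x\<rfloor> + 1"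
proof -
  assume "x \<notin> \<int>"
  then have "of_int \<lfloor>x\<rfloor> \<noteq> x" by (metis Ints_of_int)
  then show ?thesis using of_int_floor_le[of x] floor_correct[of x] by linarith
qed

lemma half_not_Ints: "(1/2::real) \<notin> \<int>"
  by (rule not_Ints_between[of 0]) auto

lemma frac_not_Ints: "frac x = c \<Longrightarrow> c \<noteq> 0 \<Longrightarrow> x \<notin> \<int>"
  using frac_eq_0_iff[of x] by auto

lemma odd_or_odd_if_coprime: "coprime (a::int) b \<Longrightarrow> odd a \<or> odd b"
  using coprime_common_divisor[of a b 2] by auto

lemma even_if_even_line_forms:
  fixes a1 b1 a2 b2 a3 b3 M N :: int
  assumes "odd a1 \<or> odd b1" "odd a2 \<or> odd b2" "odd a3 \<or> odd b3"
    "even (a3 - a1 - a2)" "even (b3 - b1 - b2)" "even (a1 * M + b1 * N)" "even (a2 * M + b2 * N)"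
  shows "even M \<and> even N"
  using assms by auto

lemma convex_comb_strictly_between:
  fixes A B s t u :: real
  assumes "0 < u" "u \<le> 1" "A \<le> s" "s \<le> B" "A < t" "t < B"
  shows "A < (1 - u) * s + u * t \<and> (1 - u) * s + u * t < B"
proof -
  have "(1 - u) * s + u * t - A = (1 - u) * (s - A) + u * (t - A)"
    "B - ((1 - u) * s + u * t) = (1 - u) * (B - s) + u * (B - t)" by algebra+
  moreover have "0 < u * (t - A)" "0 \<le> (1 - u) * (s - A)" "0 < u * (B - t)" "0 \<le> (1 - u) * (B - s)"
    using assms by auto
  ultimately show ?thesis by linarith
qed

lemma card_components_le_connected_cover:
  assumes "finite K" "\<And>k. k \<in> K \<Longrightarrow> connected k" "\<Union>K = S"
  shows "finite (components S) \<and> card (components S) \<le> card K"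
proof -
  define F where "F k = connected_component_set S (SOME x. x \<in> k)" for k
  have "components S \<subseteq> F ` {k\<in>K. k \<noteq> {}}"
  proof
    fix C assume "C \<in> components S"
    then obtain x where x: "x \<in> S" "C = connected_component_set S x" by (auto simp: components_def)
    then obtain k where k: "k \<in> K" "x \<in> k" using assms(3) by blast
    define y where "y = (SOME x. x \<in> k)"
    have y: "y \<in> k" using k(2) unfolding y_def by (metis someI)
    have ksub: "k \<subseteq> S" using k(1) assms(3) by blast
    have "connected_component S x y"
      by (rule connected_componentI[OF assms(2)[OF k(1)] ksub k(2) y])
    then have "connected_component_set S y = connected_component_set S x"
      by (intro connected_component_eq) simp
    then have "C = F k" using x(2) by (simp add: F_def y_def)
    then show "C \<in> F ` {k\<in>K. k \<noteq> {}}" using k by blast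
  qed
  moreover have "finite (F ` {k\<in>K. k \<noteq> {}})" using assms(1) by simp
  moreover have "card (F ` {k\<in>K. k \<noteq> {}}) \<le> card K"
  proof -
    have "card (F ` {k\<in>K. k \<noteq> {}}) \<le> card {k\<in>K. k \<noteq> {}}"
      using assms(1) by (intro card_image_le) simp
    also have "\<dots> \<le> card K" using assms(1) by (intro card_mono) auto
    finally show ?thesis .
  qed
  ultimately show ?thesis using card_mono finite_subset order_trans by metis
qed

lemma card_image_le_card_image_factor:
  assumes "finite (t ` X)" "\<And>x y. x \<in> X \<Longrightarrow> y \<in> X \<Longrightarrow> t x = t y \<Longrightarrow> F x = F y"
  shows "finite (F ` X) \<and> card (F ` X) \<le> card (t ` X)"
proof -
  have "F ` X = (\<lambda>u. F (inv_into X t u)) ` (t ` X)"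
  proof (intro set_eqI iffI)
    fix v assume "v \<in> F ` X"
    then obtain x where x: "x \<in> X" "v = F x" by blast
    then have "F (inv_into X t (t x)) = F x"
      using assms(2) by (meson f_inv_into_f image_eqI inv_into_into)
    then show "v \<in> (\<lambda>u. F (inv_into X t u)) ` (t ` X)" using x by force
  qed (auto intro: inv_into_into)
  then show ?thesis using assms(1) by (metis card_image_le finite_imageI)
qed

lemma card_image_le_card_components:
  fixes f :: "'a::topological_space \<Rightarrow> 'b::metric_space"
  assumes "continuous_on S f" "finite (f ` S)" "finite (components S)"
  shows "card (f ` S) \<le> card (components S)"
proof -
  have sing: "\<exists>v. f ` C = {v}" if C: "C \<in> components S" for C
  proof -
    have "C \<subseteq> S" using C by (simp add: in_components_subset)
    moreover have "connected C" using C by (simp add: in_components_connected)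
    ultimately have "connected (f ` C)" using assms(1) by (metis connected_continuous_image continuous_on_subset)
    moreover have "finite (f ` C)" using \<open>C \<subseteq> S\<close> assms(2) by (meson finite_subset image_mono)
    moreover have "f ` C \<noteq> {}" using C in_components_nonempty by blast
    ultimately show ?thesis using connected_finite_iff_sing by blast
  qed
  define val where "val C = the_elem (f ` C)" for C
  have "f ` S \<subseteq> val ` components S"
  proof
    fix v assume "v \<in> f ` S"
    then obtain s where s: "s \<in> S" "v = f s" by blast
    define C where "C = connected_component_set S s"
    have C: "C \<in> components S" using s(1) by (simp add: C_def components_def)
    have "s \<in> C" using s(1) by (simp add: C_def)
    then obtain u where "f ` C = {u}" "f s = u" using sing[OF C] by blast
    then have "v = val C" using s by (simp add: val_def)
    then show "v \<in> val ` components S" using C by blast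
  qed
  then show ?thesis by (meson assms(3) card_image_le card_mono finite_imageI order_trans)
qed

lemma odd_card_involution:
  assumes "finite V" "\<forall>x\<in>V. f x \<in> V \<and> f (f x) = x" "{x\<in>V. f x = x} = {x0}"
  shows "odd (card V)"
  using assms
proof (induction "card V" arbitrary: V rule: less_induct)
  case less
  have x0: "x0 \<in> V" "f x0 = x0" using less.prems(3) by auto
  show ?case
  proof (cases "V = {x0}")
    case True then show ?thesis by simp
  next
    case False
    then obtain x where x: "x \<in> V" "x \<noteq> x0" using x0 by blast
    have fx: "f x \<in> V" "f (f x) = x" using less.prems(2) x(1) by auto
    have nfx: "f x \<noteq> x" using less.prems(3) x by blast
    have fx0: "f x \<noteq> x0" using fx(2) x0(2) x(2) by metis
    define V' where "V' = V - {x, f x}"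
    have c2: "card {x, f x} = 2" using nfx by simp
    have "card {x, f x} \<le> card V" using less.prems(1) x(1) fx(1) by (intro card_mono) auto
    moreover have "card V' = card V - card {x, f x}"
      using less.prems(1) x(1) fx(1) unfolding V'_def by (intro card_Diff_subset) auto
    ultimately have cV: "card V = card V' + 2" using c2 by simp
    have "odd (card V')"
    proof (rule less.hyps)
      show "card V' < card V" using cV by simp
      show "finite V'" using less.prems(1) by (simp add: V'_def)
      show "\<forall>y\<in>V'. f y \<in> V' \<and> f (f y) = y"
      proof
        fix y assume y: "y \<in> V'"
        then have yV: "y \<in> V" "y \<noteq> x" "y \<noteq> f x" by (auto simp: V'_def)
        have "f y \<in> V" "f (f y) = y" using less.prems(2) yV(1) by auto
        moreover have "f y \<noteq> x" using yV fx(2) \<open>f (f y) = y\<close> by metis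
        moreover have "f y \<noteq> f x" using yV fx(2) \<open>f (f y) = y\<close> by metis
        ultimately show "f y \<in> V' \<and> f (f y) = y" by (simp add: V'_def)
      qed
      show "{y\<in>V'. f y = y} = {x0}" using less.prems(3) x(2) fx0 by (auto simp: V'_def)
    qed
    then show ?thesis using cV by simp
  qed
qed

section \<open>The torus\<close>

lemma cis_2pi_eq_iff: "cis (2 * pi * x) = cis (2 * pi * y) \<longleftrightarrow> x - y \<in> \<int>"
proof -
  have e: "2 * pi * x = 2 * pi * y + 2 * pi * n \<longleftrightarrow> x - y = n" for n :: real
  proof -
    have "2 * pi * x = 2 * pi * y + 2 * pi * n \<longleftrightarrow> 2 * pi * (x - y) = 2 * pi * n"
      by (auto simp: right_diff_distrib)
    then show ?thesis by simp
  qed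
  have "cis (2 * pi * x) = cis (2 * pi * y) \<longleftrightarrow> (\<exists>n::int. 2 * pi * x = 2 * pi * y + 2 * pi * n)"
    using sin_cos_eq_iff[of "2 * pi * x" "2 * pi * y"] by (auto simp: complex_eq_iff)
  then show ?thesis unfolding e by (auto elim: Ints_cases)
qed

lemma torus_map_eq_iff:
  "torus_map p = torus_map q \<longleftrightarrow> fst p - fst q \<in> \<int> \<and> snd p - snd q \<in> \<int>"
  by (cases p; cases q) (simp add: torus_map_def cis_2pi_eq_iff)

definition int_point :: "int \<times> int \<Rightarrow> real \<times> real" where
  "int_point z = (of_int (fst z), of_int (snd z))"

lemma torus_map_add_int_point [simp]: "torus_map (p + int_point z) = torus_map p"
  by (simp add: torus_map_eq_iff int_point_def)

lemma torus_map_eqE: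
  assumes "torus_map p = torus_map q"
  obtains z where "p = q + int_point z"
proof -
  obtain m n where "fst p - fst q = of_int m" "snd p - snd q = of_int n"
    using assms by (metis torus_map_eq_iff Ints_cases)
  then have "p = q + int_point (m, n)" by (simp add: prod_eq_iff int_point_def algebra_simps)
  then show thesis by (rule that)
qed

lemma continuous_on_torus_map: "continuous_on S torus_map"
  unfolding torus_map_def case_prod_unfold by (intro continuous_intros)

lemma torus_subset_eqI:
  assumes "A \<subseteq> torus" "B \<subseteq> torus" "\<And>p. torus_map p \<in> A \<longleftrightarrow> torus_map p \<in> B"
  shows "A = B"
proof (intro equalityI subsetI)
  fix x assume "x \<in> A"
  then obtain p where "x = torus_map p" using assms(1) by (auto simp: torus_def)
  then show "x \<in> B" using assms(3) \<open>x \<in> A\<close> by simp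
next
  fix x assume "x \<in> B"
  then obtain p where "x = torus_map p" using assms(2) by (auto simp: torus_def)
  then show "x \<in> A" using assms(3) \<open>x \<in> B\<close> by simp
qed

lemma torus_reflectionE:
  obtains \<rho> where "\<And>p. \<rho> (torus_map p) = torus_map (2 *\<^sub>R w - p)"
proof
  fix p
  define q where "q = (SOME q. torus_map p = torus_map q)"
  have "torus_map p = torus_map q" unfolding q_def by (rule someI[of _ p]) simp
  then have "fst p - fst q \<in> \<int>" "snd p - snd q \<in> \<int>" by (simp_all add: torus_map_eq_iff)
  moreover have "fst (2 *\<^sub>R w - q) - fst (2 *\<^sub>R w - p) = fst p - fst q"
    "snd (2 *\<^sub>R w - q) - snd (2 *\<^sub>R w - p) = snd p - snd q" by simp_all
  ultimately have "torus_map (2 *\<^sub>R w - q) = torus_map (2 *\<^sub>R w - p)"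
    by (simp only: torus_map_eq_iff)
  then show "torus_map (2 *\<^sub>R w - (SOME q. torus_map p = torus_map q)) = torus_map (2 *\<^sub>R w - p)"
    by (simp add: q_def)
qed

section \<open>Toric lines\<close>

definition tline :: "int \<Rightarrow> int \<Rightarrow> real \<Rightarrow> (complex \<times> complex) set" where
  "tline a b c = torus_map ` {(x, y). real_of_int a * x + real_of_int b * y = c}"

definition line_form :: "int \<Rightarrow> int \<Rightarrow> real \<Rightarrow> real \<times> real \<Rightarrow> real" where
  "line_form a b c p = of_int a * fst p + of_int b * snd p - c"

lemma line_form_add: "line_form a b c (p + q) = line_form a b c p + line_form a b 0 q"
  by (simp add: line_form_def algebra_simps)

lemma line_form_add_int_point:
  "line_form a b c (p + int_point z) = line_form a b c p + of_int (a * fst z + b * snd z)"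
  by (simp add: line_form_def int_point_def algebra_simps)

lemma line_form_convex_comb:
  "line_form a b c ((1 - t) *\<^sub>R p + t *\<^sub>R q) = (1 - t) * line_form a b c p + t * line_form a b c q"
  by (simp add: line_form_def algebra_simps)

lemma continuous_on_line_form: "continuous_on S (line_form a b c)"
  unfolding line_form_def by (intro continuous_intros)

lemma torus_map_in_tline_iff:
  assumes "coprime a b"
  shows "torus_map p \<in> tline a b c \<longleftrightarrow> line_form a b c p \<in> \<int>"
proof
  assume "torus_map p \<in> tline a b c"
  then obtain q where q: "line_form a b c q = 0" "torus_map p = torus_map q"
    by (auto simp: tline_def line_form_def)
  obtain z where "p = q + int_point z" using torus_map_eqE[OF q(2)] by blast
  then show "line_form a b c p \<in> \<int>" using q(1) by (simp add: line_form_add_int_point)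
next
  assume "line_form a b c p \<in> \<int>"
  then obtain m where m: "line_form a b c p = of_int m" by (auto elim: Ints_cases)
  obtain e f where ef: "e * a + f * b = 1" using bezout_int[of a b] assms by auto
  define q where "q = p + int_point (- m * e, - m * f)"
  have "line_form a b c q = of_int (m - m * (e * a + f * b))"
    using m by (simp add: q_def line_form_add_int_point algebra_simps)
  then have "real_of_int a * fst q + real_of_int b * snd q = c"
    using ef by (simp add: line_form_def)
  moreover have "torus_map p = torus_map q" by (simp add: q_def)
  ultimately show "torus_map p \<in> tline a b c" unfolding tline_def by (cases q) auto
qed

lemma tline_subset_torus: "tline a b c \<subseteq> torus"
  by (auto simp: tline_def torus_def)

lemma toric_line_of_type_iff: "toric_line_of_type l a b \<longleftrightarrow> coprime a b \<and> (\<exists>c. l = tline a b c)"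
  by (auto simp: toric_line_of_type_def tline_def)

lemma tline_uminus: "tline (- a) (- b) c = tline a b (- c)"
proof -
  have "{(x, y). real_of_int (- a) * x + real_of_int (- b) * y = c} =
        {(x, y). real_of_int a * x + real_of_int b * y = - c}"
    by auto
  then show ?thesis by (simp add: tline_def)
qed

text \<open>Along a line of type \<open>(a, b)\<close>, the form of a non-parallel type \<open>(a', b')\<close> runs
  through all reals, so it takes the non-integral value \<open>1/2\<close> at a point of the line.\<close>
lemma toric_line_of_type_tline_det_eq_0:
  assumes "toric_line_of_type (tline a b c) a' b'" "coprime a b"
  shows "a * b' - a' * b = 0"
proof (rule ccontr)
  assume dz: "a * b' - a' * b \<noteq> 0"
  obtain c' where cop': "coprime a' b'" and eq: "tline a b c = tline a' b' c'"
    using assms(1) by (auto simp: toric_line_of_type_iff)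
  define N where "N = (of_int a)^2 + (of_int b :: real)^2"
  have N: "N \<noteq> 0" using assms(2) by (auto simp: N_def)
  define p where "p t = (c * of_int a / N + t * (- of_int b), c * of_int b / N + t * of_int a)" for t
  have on: "of_int a * fst (p t) + of_int b * snd (p t) = c" for t
    using N by (simp add: p_def field_simps) (simp add: N_def power2_eq_square algebra_simps)
  have "torus_map (p t) \<in> tline a b c" for t
    using on[of t] unfolding tline_def by (cases "p t") force
  then have int: "line_form a' b' c' (p t) \<in> \<int>" for t
    using eq torus_map_in_tline_iff[OF cop'] by simp
  define Dr where "Dr = real_of_int (a * b' - a' * b)"
  have "Dr \<noteq> 0" using dz unfolding Dr_def by linarith
  have lin: "line_form a' b' c' (p t) = line_form a' b' c' (p 0) + t * Dr" for t
    by (simp add: p_def line_form_def Dr_def algebra_simps)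
  have "line_form a' b' c' (p (1 / (2 * Dr))) - line_form a' b' c' (p 0) = 1/2"
    using lin[of "1 / (2 * Dr)"] \<open>Dr \<noteq> 0\<close> by simp
  then show False using Ints_diff[OF int int] half_not_Ints by metis
qed

lemma coprime_det_eq_0_cases:
  fixes a b a' b' :: int
  assumes "coprime a b" "coprime a' b'" "a * b' = a' * b"
  shows "(a', b') = (a, b) \<or> (a', b') = (- a, - b)"
proof -
  have "a dvd a' * b" "a' dvd a * b'" using assms(3) by (metis dvd_triv_left)+
  moreover have "b dvd b' * a" "b' dvd b * a'" using assms(3) by (metis dvd_triv_left mult.commute)+
  ultimately
  have "a dvd a'" "a' dvd a" "b dvd b'" "b' dvd b"
    using assms(1,2) by (simp_all add: coprime_commute coprime_dvd_mult_left_iff)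
  then have a': "a' = a \<or> a' = - a" and b': "b' = b \<or> b' = - b"
    using zdvd_antisym_abs abs_eq_iff by metis+
  have "a * b = 0" if "a' = a \<and> b' = - b \<or> a' = - a \<and> b' = b"
    using that assms(3) by auto
  then show ?thesis using a' b' by force
qed

lemma arr_vertices_three:
  assumes "X \<noteq> Y" "X \<noteq> Z" "Y \<noteq> Z" "X \<subseteq> torus" "Y \<subseteq> torus" "Z \<subseteq> torus"
  shows "arr_vertices {X, Y, Z} = (X \<inter> Y) \<union> (X \<inter> Z) \<union> (Y \<inter> Z)"
proof -
  have "2 \<le> card {l \<in> {X, Y, Z}. p \<in> l} \<longleftrightarrow> p \<in> (X \<inter> Y) \<union> (X \<inter> Z) \<union> (Y \<inter> Z)" for p
  proof -
    have E: "{l \<in> {X, Y, Z}. p \<in> l} =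
        (if p \<in> X then {X} else {}) \<union> (if p \<in> Y then {Y} else {}) \<union> (if p \<in> Z then {Z} else {})"
      by auto
    show ?thesis unfolding E using assms(1-3)
      by (cases "p \<in> X"; cases "p \<in> Y"; cases "p \<in> Z"; simp add: card_insert_if)
  qed
  then show ?thesis using assms(4-6) by (auto simp: arr_vertices_def)
qed

lemma toric_line_of_type_tline_if_det_eq_0:
  assumes "coprime a b" "coprime a' b'" "a * b' - a' * b = 0"
  shows "toric_line_of_type (tline a' b' c) a b"
proof -
  have "(a', b') = (a, b) \<or> (a', b') = (- a, - b)"
    using coprime_det_eq_0_cases assms by simp
  then show ?thesis using assms(1) by (auto simp: toric_line_of_type_iff tline_uminus)
qed

section \<open>Chambers of three lines\<close>

locale three_lines =
  fixes a1 b1 a2 b2 a3 b3 :: int and c1 c2 c3 :: real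
  assumes coprime1: "coprime a1 b1" and coprime2: "coprime a2 b2" and coprime3: "coprime a3 b3"
    and det12_nonzero: "a1 * b2 - a2 * b1 \<noteq> 0"
begin

abbreviation "l1 \<equiv> line_form a1 b1 c1"
abbreviation "l2 \<equiv> line_form a2 b2 c2"
abbreviation "l3 \<equiv> line_form a3 b3 c3"
abbreviation "L1 \<equiv> tline a1 b1 c1"
abbreviation "L2 \<equiv> tline a2 b2 c2"
abbreviation "L3 \<equiv> tline a3 b3 c3"

lemma torus_map_in_lines_iff:
  "torus_map p \<in> L1 \<longleftrightarrow> l1 p \<in> \<int>" "torus_map p \<in> L2 \<longleftrightarrow> l2 p \<in> \<int>"
  "torus_map p \<in> L3 \<longleftrightarrow> l3 p \<in> \<int>"
  using torus_map_in_tline_iff coprime1 coprime2 coprime3 by blast+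

definition off_lines :: "(real \<times> real) set" where
  "off_lines = {p. l1 p \<notin> \<int> \<and> l2 p \<notin> \<int> \<and> l3 p \<notin> \<int>}"

lemma torus_minus_lines: "torus - (L1 \<union> L2 \<union> L3) = torus_map ` off_lines"
  by (auto simp: torus_def off_lines_def torus_map_in_lines_iff)

definition cell :: "int \<times> int \<times> int \<Rightarrow> (real \<times> real) set" where
  "cell j = {p. of_int (fst j) < l1 p \<and> l1 p < of_int (fst j) + 1 \<and>
                of_int (fst (snd j)) < l2 p \<and> l2 p < of_int (fst (snd j)) + 1 \<and>
                of_int (snd (snd j)) < l3 p \<and> l3 p < of_int (snd (snd j)) + 1}"

definition parallelogram :: "int \<Rightarrow> int \<Rightarrow> (real \<times> real) set" where
  "parallelogram i1 i2 =
     {p. of_int i1 < l1 p \<and> l1 p < of_int i1 + 1 \<and> of_int i2 < l2 p \<and> l2 p < of_int i2 + 1}"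

definition cell_index :: "real \<times> real \<Rightarrow> int \<times> int \<times> int" where
  "cell_index p = (\<lfloor>l1 p\<rfloor>, \<lfloor>l2 p\<rfloor>, \<lfloor>l3 p\<rfloor>)"

definition cell_indices :: "(int \<times> int \<times> int) set" where
  "cell_indices = cell_index ` off_lines"

definition shift_index :: "int \<times> int \<Rightarrow> int \<times> int \<times> int \<Rightarrow> int \<times> int \<times> int" where
  "shift_index z j = (fst j + a1 * fst z + b1 * snd z, fst (snd j) + a2 * fst z + b2 * snd z,
                      snd (snd j) + a3 * fst z + b3 * snd z)"

lemma mem_cell_index: "p \<in> off_lines \<Longrightarrow> p \<in> cell (cell_index p)"
  by (simp add: off_lines_def cell_def cell_index_def not_Ints_floor_bounds)

lemma cell_subset_off_lines: "cell j \<subseteq> off_lines"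
  by (auto simp: cell_def off_lines_def dest: not_Ints_between)

lemma cell_subset_parallelogram: "cell j \<subseteq> parallelogram (fst j) (fst (snd j))"
  by (auto simp: cell_def parallelogram_def)

lemma cell_nonempty: "j \<in> cell_indices \<Longrightarrow> \<exists>q. q \<in> cell j"
  unfolding cell_indices_def using mem_cell_index by blast

lemma cell_shift_index: "cell (shift_index z j) = (\<lambda>p. p + int_point z) ` cell j"
proof (intro set_eqI iffI)
  fix p assume "p \<in> cell (shift_index z j)"
  then have "p + int_point (- fst z, - snd z) \<in> cell j"
    by (simp add: cell_def shift_index_def line_form_add_int_point algebra_simps)
  moreover have "p = p + int_point (- fst z, - snd z) + int_point z"
    by (simp add: int_point_def zero_prod_def)
  ultimately show "p \<in> (\<lambda>p. p + int_point z) ` cell j" by blast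
next
  fix p assume "p \<in> (\<lambda>p. p + int_point z) ` cell j"
  then obtain q where "q \<in> cell j" "p = q + int_point z" by blast
  then show "p \<in> cell (shift_index z j)"
    by (simp add: cell_def shift_index_def line_form_add_int_point algebra_simps)
qed

lemma torus_map_cell_shift_index: "torus_map ` cell (shift_index z j) = torus_map ` cell j"
  by (simp add: cell_shift_index image_image)

lemma parallelogram_add_int_point:
  "p \<in> parallelogram i1 i2 \<Longrightarrow>
   p + int_point z \<in> parallelogram (i1 + (a1 * fst z + b1 * snd z)) (i2 + (a2 * fst z + b2 * snd z))"
  by (simp add: parallelogram_def line_form_add_int_point)

lemma parallelogram_add_int_point_eq:
  assumes "p \<in> parallelogram i1 i2" "p + int_point z \<in> parallelogram i1' i2'"
  shows "i1' = i1 + (a1 * fst z + b1 * snd z) \<and> i2' = i2 + (a2 * fst z + b2 * snd z)"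
proof -
  have "\<lfloor>l1 (p + int_point z)\<rfloor> = i1'" "\<lfloor>l1 p\<rfloor> = i1"
    "\<lfloor>l2 (p + int_point z)\<rfloor> = i2'" "\<lfloor>l2 p\<rfloor> = i2"
    using assms by (simp_all add: parallelogram_def floor_eq_iff)
  then show ?thesis by (simp only: line_form_add_int_point floor_add_int[symmetric])
qed

lemma det12_real_nonzero: "real_of_int a1 * real_of_int b2 - real_of_int a2 * real_of_int b1 \<noteq> 0"
  using det12_nonzero by (metis of_int_eq_0_iff of_int_diff of_int_mult)

definition coord_point :: "real \<Rightarrow> real \<Rightarrow> real \<times> real" where
  "coord_point u v =
     (((u + c1) * of_int b2 - of_int b1 * (v + c2)) / of_int (a1 * b2 - a2 * b1),
      (of_int a1 * (v + c2) - of_int a2 * (u + c1)) / of_int (a1 * b2 - a2 * b1))"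

lemma line_forms_coord_point: "l1 (coord_point u v) = u" "l2 (coord_point u v) = v"
proof -
  let ?D = "real_of_int a1 * real_of_int b2 - real_of_int a2 * real_of_int b1"
  have D: "?D \<noteq> 0" by (rule det12_real_nonzero)
  have lin: "a * (X / Dr) + b * (Y / Dr) = V" if "Dr \<noteq> 0" "a * X + b * Y = V * Dr"
    for a b X Y V Dr :: real
    using that by (simp add: field_simps)
  have "of_int a1 * (((u + c1) * of_int b2 - of_int b1 * (v + c2)) / ?D) +
        of_int b1 * ((of_int a1 * (v + c2) - of_int a2 * (u + c1)) / ?D) = u + c1"
    by (rule lin[OF D]) algebra
  then show "l1 (coord_point u v) = u" by (simp add: coord_point_def line_form_def)
  have "of_int a2 * (((u + c1) * of_int b2 - of_int b1 * (v + c2)) / ?D) +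
        of_int b2 * ((of_int a1 * (v + c2) - of_int a2 * (u + c1)) / ?D) = v + c2"
    by (rule lin[OF D]) algebra
  then show "l2 (coord_point u v) = v" by (simp add: coord_point_def line_form_def)
qed

lemma coord_point_line_forms: "coord_point (l1 p) (l2 p) = p"
  using det12_real_nonzero by (simp add: coord_point_def line_form_def prod_eq_iff field_simps)

lemma convex_line_form_strip: "convex {p. A < line_form a b c p \<and> line_form a b c p < B}"
  unfolding convex_alt
proof (intro ballI allI impI)
  fix x y and u :: real
  assume xy: "x \<in> {p. A < line_form a b c p \<and> line_form a b c p < B}"
    "y \<in> {p. A < line_form a b c p \<and> line_form a b c p < B}" and u: "0 \<le> u \<and> u \<le> 1"
  show "(1 - u) *\<^sub>R x + u *\<^sub>R y \<in> {p. A < line_form a b c p \<and> line_form a b c p < B}"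
  proof (cases "u = 0")
    case False
    then show ?thesis using xy u convex_comb_strictly_between[of u A "line_form a b c x" B]
      by (simp add: line_form_convex_comb)
  qed (use xy in simp)
qed

lemma convex_cell: "convex (cell j)"
proof -
  have "cell j =
      {p. of_int (fst j) < l1 p \<and> l1 p < of_int (fst j) + 1} \<inter>
      {p. of_int (fst (snd j)) < l2 p \<and> l2 p < of_int (fst (snd j)) + 1} \<inter>
      {p. of_int (snd (snd j)) < l3 p \<and> l3 p < of_int (snd (snd j)) + 1}"
    by (auto simp: cell_def)
  then show ?thesis by (simp add: convex_Int convex_line_form_strip)
qed

lemma convex_parallelogram: "convex (parallelogram i1 i2)"
proof -
  have "parallelogram i1 i2 =
      {p. of_int i1 < l1 p \<and> l1 p < of_int i1 + 1} \<inter> {p. of_int i2 < l2 p \<and> l2 p < of_int i2 + 1}"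
    by (auto simp: parallelogram_def)
  then show ?thesis by (simp add: convex_Int convex_line_form_strip)
qed

lemma open_parallelogram: "open (parallelogram i1 i2)"
  unfolding parallelogram_def
  by (intro open_Collect_conj open_Collect_less continuous_on_line_form continuous_on_const)

text \<open>The floor of the cell \<open>(i1, i2, i3)\<close> is the part of the line \<open>l3 = i3\<close> over the closed
  parallelogram of \<open>(i1, i2)\<close>. A cell is low if its floor line misses the open parallelogram;
  otherwise it is tagged by the top of its floor in the direction along \<open>L3\<close>.\<close>
definition low_cell :: "int \<times> int \<times> int \<Rightarrow> bool" where
  "low_cell j \<longleftrightarrow> (\<forall>q\<in>parallelogram (fst j) (fst (snd j)). of_int (snd (snd j)) \<le> l3 q)"

definition floor_segment :: "int \<times> int \<times> int \<Rightarrow> (real \<times> real) set" where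
  "floor_segment j = {p. of_int (fst j) \<le> l1 p \<and> l1 p \<le> of_int (fst j) + 1 \<and>
     of_int (fst (snd j)) \<le> l2 p \<and> l2 p \<le> of_int (fst (snd j)) + 1 \<and> l3 p = of_int (snd (snd j))}"

definition l3_dir :: "real \<times> real" where
  "l3_dir = (- of_int b3, of_int a3)"

definition height :: "real \<times> real \<Rightarrow> real" where
  "height p = - of_int b3 * fst p + of_int a3 * snd p"

definition is_floor_top :: "int \<times> int \<times> int \<Rightarrow> real \<times> real \<Rightarrow> bool" where
  "is_floor_top j w \<longleftrightarrow> w \<in> floor_segment j \<and> (\<forall>v\<in>floor_segment j. height v \<le> height w)"

definition floor_top :: "int \<times> int \<times> int \<Rightarrow> real \<times> real" where
  "floor_top j = (SOME w. is_floor_top j w)"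

lemma sum_squares_a3_b3_pos: "0 < (of_int a3)^2 + (of_int b3 :: real)^2"
  using coprime3 by (auto simp: sum_power2_gt_zero_iff)

lemma line_form_add_l3_dir:
  "line_form a b c (p + e *\<^sub>R l3_dir) = line_form a b c p + e * (of_int b * of_int a3 - of_int a * of_int b3)"
  by (simp add: line_form_def l3_dir_def algebra_simps)

lemma l3_add_l3_dir: "l3 (p + e *\<^sub>R l3_dir) = l3 p"
  by (simp add: line_form_add_l3_dir)

lemma height_add_l3_dir: "height (p + e *\<^sub>R l3_dir) = height p + e * ((of_int a3)^2 + (of_int b3)^2)"
  by (simp add: height_def l3_dir_def algebra_simps power2_eq_square)

lemma parallelogram_subset_floor_segment:
  "p \<in> parallelogram (fst j) (fst (snd j)) \<Longrightarrow> l3 p = of_int (snd (snd j)) \<Longrightarrow> p \<in> floor_segment j"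
  by (simp add: parallelogram_def floor_segment_def)

lemma compact_floor_segment: "compact (floor_segment j)"
proof -
  let ?box = "{of_int (fst j) .. of_int (fst j) + 1} \<times> {of_int (fst (snd j)) .. of_int (fst (snd j)) + 1}"
  have "closed (floor_segment j)" unfolding floor_segment_def
    by (intro closed_Collect_conj closed_Collect_le closed_Collect_eq continuous_on_line_form
        continuous_on_const)
  moreover have "compact ((\<lambda>(u, v). coord_point u v) ` ?box)"
    by (intro compact_continuous_image compact_Times compact_Icc)
       (unfold coord_point_def case_prod_unfold, intro continuous_intros, use det12_real_nonzero in auto)
  moreover have "floor_segment j \<subseteq> (\<lambda>(u, v). coord_point u v) ` ?box"
  proof
    fix p assume "p \<in> floor_segment j"
    then have "(l1 p, l2 p) \<in> ?box" by (simp add: floor_segment_def)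
    then show "p \<in> (\<lambda>(u, v). coord_point u v) ` ?box"
      by (metis (no_types, lifting) case_prod_conv coord_point_line_forms image_eqI)
  qed
  ultimately show ?thesis by (metis compact_Int_closed inf.absorb_iff2)
qed

lemma floor_meets_parallelogram:
  assumes "j \<in> cell_indices" "\<not> low_cell j"
  obtains m where "m \<in> parallelogram (fst j) (fst (snd j))" "l3 m = of_int (snd (snd j))"
proof -
  obtain q1 where q1: "q1 \<in> parallelogram (fst j) (fst (snd j))" "l3 q1 < of_int (snd (snd j))"
    using assms(2) unfolding low_cell_def by force
  obtain q2 where q2: "q2 \<in> cell j" using cell_nonempty assms(1) by blast
  have q2': "q2 \<in> parallelogram (fst j) (fst (snd j))" "of_int (snd (snd j)) < l3 q2"
    using subsetD[OF cell_subset_parallelogram q2] q2 by (auto simp: cell_def)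
  define t where "t = (of_int (snd (snd j)) - l3 q1) / (l3 q2 - l3 q1)"
  have t: "0 < t" "t < 1" using q1(2) q2'(2) by (auto simp: t_def field_simps)
  define m where "m = (1 - t) *\<^sub>R q1 + t *\<^sub>R q2"
  have "l3 m = (1 - t) * l3 q1 + t * l3 q2" by (simp add: m_def line_form_convex_comb)
  also have "\<dots> = l3 q1 + t * (l3 q2 - l3 q1)" by algebra
  also have "t * (l3 q2 - l3 q1) = of_int (snd (snd j)) - l3 q1"
    using q1(2) q2'(2) by (simp add: t_def)
  finally have "l3 m = of_int (snd (snd j))" by simp
  moreover have "m \<in> parallelogram (fst j) (fst (snd j))"
    unfolding m_def using convex_parallelogram q1(1) q2'(1) t by (intro convexD) auto
  ultimately show thesis by (rule that[rotated])
qed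

lemma is_floor_top_floor_top:
  assumes "j \<in> cell_indices" "\<not> low_cell j"
  shows "is_floor_top j (floor_top j)"
proof -
  obtain m where "m \<in> parallelogram (fst j) (fst (snd j))" "l3 m = of_int (snd (snd j))"
    using floor_meets_parallelogram[OF assms] .
  then have "floor_segment j \<noteq> {}" using parallelogram_subset_floor_segment by blast
  moreover have "continuous_on (floor_segment j) height" unfolding height_def by (intro continuous_intros)
  ultimately obtain w where "w \<in> floor_segment j" "\<forall>v\<in>floor_segment j. height v \<le> height w"
    using continuous_attains_sup[OF compact_floor_segment] by blast
  then have "is_floor_top j w" by (simp add: is_floor_top_def)
  then show ?thesis unfolding floor_top_def by (rule someI)
qed

text \<open>Inside the open parallelogram the floor segment could be followed further uphill.\<close>
lemma is_floor_top_on_L1_or_L2: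
  assumes "is_floor_top j w"
  shows "l1 w \<in> \<int> \<or> l2 w \<in> \<int>"
proof (rule ccontr)
  assume nz: "\<not> (l1 w \<in> \<int> \<or> l2 w \<in> \<int>)"
  have ws: "w \<in> floor_segment j" and top: "\<forall>v\<in>floor_segment j. height v \<le> height w"
    using assms by (auto simp: is_floor_top_def)
  have int: "of_int k \<in> \<int>" "of_int k + 1 \<in> \<int>" for k :: int by auto
  have "of_int (fst j) \<noteq> l1 w" "of_int (fst (snd j)) \<noteq> l2 w" using nz int(1) by metis+
  moreover have "l1 w \<noteq> of_int (fst j) + 1" "l2 w \<noteq> of_int (fst (snd j)) + 1" using nz int(2) by metis+
  ultimately have "w \<in> parallelogram (fst j) (fst (snd j))"
    using ws by (simp add: floor_segment_def parallelogram_def less_le)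
  then obtain \<epsilon> where \<epsilon>: "0 < \<epsilon>" "ball w \<epsilon> \<subseteq> parallelogram (fst j) (fst (snd j))"
    using open_parallelogram open_contains_ball by blast
  have "l3_dir \<noteq> 0" using coprime3 by (auto simp: l3_dir_def zero_prod_def)
  then have n: "0 < norm l3_dir" by simp
  define e where "e = \<epsilon> / (2 * norm l3_dir)"
  have "0 < e" using \<epsilon>(1) n by (simp add: e_def)
  have "dist w (w + e *\<^sub>R l3_dir) < \<epsilon>" using \<epsilon>(1) n by (simp add: dist_norm e_def)
  then have "w + e *\<^sub>R l3_dir \<in> parallelogram (fst j) (fst (snd j))"
    using \<epsilon>(2) by (meson mem_ball subsetD)
  then have "w + e *\<^sub>R l3_dir \<in> floor_segment j"
    using ws by (intro parallelogram_subset_floor_segment) (auto simp: l3_add_l3_dir floor_segment_def)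
  moreover have "height w < height (w + e *\<^sub>R l3_dir)"
    using \<open>0 < e\<close> sum_squares_a3_b3_pos by (simp add: height_add_l3_dir)
  ultimately show False using top by fastforce
qed

lemma floor_segment_diff:
  assumes "v \<in> floor_segment j" "w \<in> floor_segment j"
  shows "v = w + ((height v - height w) / ((of_int a3)^2 + (of_int b3)^2)) *\<^sub>R l3_dir"
proof -
  define N where "N = (of_int a3)^2 + (of_int b3 :: real)^2"
  have "N \<noteq> 0" using sum_squares_a3_b3_pos unfolding N_def by linarith
  have "of_int a3 * (fst v - fst w) + of_int b3 * (snd v - snd w) = 0"
    using assms by (simp add: floor_segment_def line_form_def algebra_simps)
  then have "N * (fst v - fst w) = - of_int b3 * (height v - height w)"
    "N * (snd v - snd w) = of_int a3 * (height v - height w)"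
    unfolding N_def height_def by algebra+
  then show ?thesis using \<open>N \<noteq> 0\<close> unfolding N_def[symmetric]
    by (simp add: prod_eq_iff l3_dir_def field_simps)
qed

lemma floor_top_descent:
  assumes "is_floor_top j w" "m \<in> parallelogram (fst j) (fst (snd j))" "l3 m = of_int (snd (snd j))"
  obtains \<tau> where "0 < \<tau>" "\<And>e. 0 < e \<Longrightarrow> e \<le> \<tau> \<Longrightarrow> w - e *\<^sub>R l3_dir \<in> parallelogram (fst j) (fst (snd j))"
proof -
  have ws: "w \<in> floor_segment j" and top: "\<forall>v\<in>floor_segment j. height v \<le> height w"
    using assms(1) by (auto simp: is_floor_top_def)
  have ms: "m \<in> floor_segment j" using assms(2,3) by (rule parallelogram_subset_floor_segment)
  define \<tau> where "\<tau> = (height w - height m) / ((of_int a3)^2 + (of_int b3)^2)"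
  have "(height m - height w) / ((of_int a3)^2 + (of_int b3)^2) = - \<tau>"
    unfolding \<tau>_def minus_divide_left by simp
  then have mw: "m = w - \<tau> *\<^sub>R l3_dir"
    using floor_segment_diff[OF ms ws] by simp
  have "0 \<le> \<tau>" using top ms sum_squares_a3_b3_pos by (simp add: \<tau>_def)
  moreover have "\<tau> \<noteq> 0"
  proof
    assume "\<tau> = 0"
    then have "m = w" using mw by simp
    then show False
      using assms(2) is_floor_top_on_L1_or_L2[OF assms(1)] not_Ints_between
      by (auto simp: parallelogram_def)
  qed
  ultimately have "0 < \<tau>" by simp
  moreover have "w - e *\<^sub>R l3_dir \<in> parallelogram (fst j) (fst (snd j))" if e: "0 < e" "e \<le> \<tau>" for e
  proof -
    define \<theta> where "\<theta> = e / \<tau>"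
    have \<theta>: "0 < \<theta>" "\<theta> \<le> 1" using e \<open>0 < \<tau>\<close> by (simp_all add: \<theta>_def)
    have eq: "w - e *\<^sub>R l3_dir = (1 - \<theta>) *\<^sub>R w + \<theta> *\<^sub>R m"
      using \<open>0 < \<tau>\<close> unfolding mw \<theta>_def by (simp add: algebra_simps)
    have "of_int (fst j) < l1 m \<and> l1 m < of_int (fst j) + 1 \<and>
        of_int (fst (snd j)) < l2 m \<and> l2 m < of_int (fst (snd j)) + 1"
      using assms(2) by (simp add: parallelogram_def)
    moreover have "of_int (fst j) \<le> l1 w \<and> l1 w \<le> of_int (fst j) + 1 \<and>
        of_int (fst (snd j)) \<le> l2 w \<and> l2 w \<le> of_int (fst (snd j)) + 1"
      using ws by (simp add: floor_segment_def)
    ultimately show ?thesis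
      unfolding eq parallelogram_def using convex_comb_strictly_between[OF \<theta>]
      by (simp add: line_form_convex_comb) meson
  qed
  ultimately show thesis by (rule that)
qed

definition cell_tag :: "int \<times> int \<times> int \<Rightarrow> bool \<times> complex \<times> complex" where
  "cell_tag j = (if low_cell j then (False, torus_map (coord_point (of_int (fst j)) (of_int (fst (snd j)))))
                 else (True, torus_map (floor_top j)))"

lemma cell_tag_mem:
  assumes "j \<in> cell_indices"
  shows "cell_tag j \<in> {False} \<times> (L1 \<inter> L2) \<union> {True} \<times> (L1 \<inter> L3 \<union> L2 \<inter> L3)"
proof (cases "low_cell j")
  case True
  then show ?thesis by (simp add: cell_tag_def torus_map_in_lines_iff line_forms_coord_point)
next
  case False
  then have top: "is_floor_top j (floor_top j)" by (rule is_floor_top_floor_top[OF assms])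
  then have "l3 (floor_top j) \<in> \<int>" by (auto simp: is_floor_top_def floor_segment_def)
  then show ?thesis
    using False is_floor_top_on_L1_or_L2[OF top] by (auto simp: cell_tag_def torus_map_in_lines_iff)
qed

lemma low_cell_third_index_le:
  assumes "low_cell (i1', i2', i3')" "q \<in> cell (i1, i2, i3)" "q + int_point z \<in> parallelogram i1' i2'"
  shows "i3' \<le> i3 + (a3 * fst z + b3 * snd z)"
proof -
  define k where "k = a3 * fst z + b3 * snd z"
  have "l3 q < of_int i3 + 1" using assms(2) by (simp add: cell_def)
  have "of_int i3' \<le> l3 (q + int_point z)" using assms(1,3) by (simp add: low_cell_def)
  also have "\<dots> = l3 q + of_int k" by (simp add: line_form_add_int_point k_def)
  finally have "real_of_int i3' < real_of_int (i3 + k + 1)" using \<open>l3 q < of_int i3 + 1\<close> by simp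
  then show ?thesis unfolding k_def[symmetric] of_int_less_iff by simp
qed

lemma shift_index_if_low_corners_eq:
  assumes "(i1, i2, i3) \<in> cell_indices" "(i1', i2', i3') \<in> cell_indices"
    and "low_cell (i1, i2, i3)" "low_cell (i1', i2', i3')"
    and "torus_map (coord_point (of_int i1') (of_int i2')) = torus_map (coord_point (of_int i1) (of_int i2))"
  shows "\<exists>z. (i1', i2', i3') = shift_index z (i1, i2, i3)"
proof -
  obtain z where "coord_point (of_int i1') (of_int i2') = coord_point (of_int i1) (of_int i2) + int_point z"
    using torus_map_eqE[OF assms(5)] .
  from arg_cong[OF this, of l1] arg_cong[OF this, of l2]
  have i1': "i1' = i1 + (a1 * fst z + b1 * snd z)" and i2': "i2' = i2 + (a2 * fst z + b2 * snd z)"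
    unfolding line_forms_coord_point line_form_add_int_point by (simp_all only: of_int_add[symmetric] of_int_eq_iff)
  obtain q where q: "q \<in> cell (i1, i2, i3)" using cell_nonempty assms(1) by blast
  obtain q' where q': "q' \<in> cell (i1', i2', i3')" using cell_nonempty assms(2) by blast
  have "q \<in> parallelogram i1 i2" "q' \<in> parallelogram i1' i2'"
    using cell_subset_parallelogram q q' by force+
  then have "q + int_point z \<in> parallelogram i1' i2'"
    using parallelogram_add_int_point i1' i2' by simp
  then have "i3' \<le> i3 + (a3 * fst z + b3 * snd z)" by (rule low_cell_third_index_le[OF assms(4) q])
  moreover have "q' + int_point (- fst z, - snd z) \<in> parallelogram i1 i2"
    using parallelogram_add_int_point[OF \<open>q' \<in> parallelogram i1' i2'\<close>, of "(- fst z, - snd z)"] i1' i2'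
    by (simp add: algebra_simps)
  then have "i3 \<le> i3' + (a3 * (- fst z) + b3 * (- snd z))"
    using low_cell_third_index_le[OF assms(3) q'] by fastforce
  ultimately show ?thesis by (intro exI[of _ z]) (simp add: shift_index_def i1' i2')
qed

lemma shift_index_if_floor_tops_eq:
  assumes "j \<in> cell_indices" "j' \<in> cell_indices" "\<not> low_cell j" "\<not> low_cell j'"
    and "floor_top j' = floor_top j + int_point z"
  shows "j' = shift_index z j"
proof -
  have top: "is_floor_top j (floor_top j)" "is_floor_top j' (floor_top j')"
    using is_floor_top_floor_top assms(1-4) by blast+
  obtain m where "m \<in> parallelogram (fst j) (fst (snd j))" "l3 m = of_int (snd (snd j))"
    using floor_meets_parallelogram[OF assms(1,3)] .
  then obtain \<tau> where \<tau>: "0 < \<tau>"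
    "\<And>e. 0 < e \<Longrightarrow> e \<le> \<tau> \<Longrightarrow> floor_top j - e *\<^sub>R l3_dir \<in> parallelogram (fst j) (fst (snd j))"
    using floor_top_descent[OF top(1)] by blast
  obtain m' where "m' \<in> parallelogram (fst j') (fst (snd j'))" "l3 m' = of_int (snd (snd j'))"
    using floor_meets_parallelogram[OF assms(2,4)] .
  then obtain \<tau>' where \<tau>': "0 < \<tau>'"
    "\<And>e. 0 < e \<Longrightarrow> e \<le> \<tau>' \<Longrightarrow> floor_top j' - e *\<^sub>R l3_dir \<in> parallelogram (fst j') (fst (snd j'))"
    using floor_top_descent[OF top(2)] by blast
  define p where "p = floor_top j - min \<tau> \<tau>' *\<^sub>R l3_dir"
  have "p \<in> parallelogram (fst j) (fst (snd j))" "p + int_point z \<in> parallelogram (fst j') (fst (snd j'))"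
    using \<tau>(2)[of "min \<tau> \<tau>'"] \<tau>'(2)[of "min \<tau> \<tau>'"] \<tau>(1) \<tau>'(1) assms(5)
    by (simp_all add: p_def algebra_simps)
  then have "fst j' = fst j + (a1 * fst z + b1 * snd z)" "fst (snd j') = fst (snd j) + (a2 * fst z + b2 * snd z)"
    using parallelogram_add_int_point_eq by blast+
  moreover have "l3 (floor_top j) = of_int (snd (snd j))" "l3 (floor_top j') = of_int (snd (snd j'))"
    using top by (auto simp: is_floor_top_def floor_segment_def)
  then have "snd (snd j') = snd (snd j) + (a3 * fst z + b3 * snd z)"
    using arg_cong[OF assms(5), of l3] unfolding line_form_add_int_point
    by (simp only: of_int_add[symmetric] of_int_eq_iff)
  ultimately show ?thesis by (simp add: shift_index_def prod_eq_iff)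
qed

lemma shift_index_if_cell_tags_eq:
  assumes "j \<in> cell_indices" "j' \<in> cell_indices" "cell_tag j = cell_tag j'"
  obtains z where "j' = shift_index z j"
proof (cases "low_cell j")
  case True
  then have "low_cell j'" using assms(3) by (auto simp: cell_tag_def split: if_splits)
  obtain i1 i2 i3 i1' i2' i3' where j: "j = (i1, i2, i3)" and j': "j' = (i1', i2', i3')"
    by (metis prod.collapse)
  have "torus_map (coord_point (of_int i1') (of_int i2')) = torus_map (coord_point (of_int i1) (of_int i2))"
    using assms(3) True \<open>low_cell j'\<close> by (simp add: cell_tag_def j j')
  then show thesis
    using shift_index_if_low_corners_eq assms(1,2) True \<open>low_cell j'\<close> that unfolding j j' by blast
next
  case False
  then have "\<not> low_cell j'" using assms(3) by (auto simp: cell_tag_def split: if_splits)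
  moreover have "torus_map (floor_top j') = torus_map (floor_top j)"
    using False \<open>\<not> low_cell j'\<close> assms(3) by (simp add: cell_tag_def)
  then obtain z where "floor_top j' = floor_top j + int_point z" by (rule torus_map_eqE)
  ultimately show thesis using False assms(1,2) shift_index_if_floor_tops_eq that by blast
qed

theorem card_chambers_le:
  assumes "finite (L1 \<inter> L2)" "finite (L1 \<inter> L3 \<union> L2 \<inter> L3)"
  shows "finite (components (torus - (L1 \<union> L2 \<union> L3))) \<and>
    card (components (torus - (L1 \<union> L2 \<union> L3))) \<le> card (L1 \<inter> L2) + card (L1 \<inter> L3 \<union> L2 \<inter> L3)"
proof -
  define T where "T = {False} \<times> (L1 \<inter> L2) \<union> {True} \<times> (L1 \<inter> L3 \<union> L2 \<inter> L3)"
  have "finite T" using assms by (simp add: T_def)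
  have card_T: "card T = card (L1 \<inter> L2) + card (L1 \<inter> L3 \<union> L2 \<inter> L3)"
    unfolding T_def using assms by (subst card_Un_disjoint) (auto simp: card_cartesian_product)
  have tags: "cell_tag ` cell_indices \<subseteq> T" using cell_tag_mem unfolding T_def by blast
  define chamber where "chamber j = torus_map ` cell j" for j
  have "finite (chamber ` cell_indices) \<and> card (chamber ` cell_indices) \<le> card (cell_tag ` cell_indices)"
  proof (rule card_image_le_card_image_factor)
    show "finite (cell_tag ` cell_indices)" using \<open>finite T\<close> tags finite_subset by blast
  next
    fix j j' assume "j \<in> cell_indices" "j' \<in> cell_indices" "cell_tag j = cell_tag j'"
    then obtain z where "j' = shift_index z j" by (rule shift_index_if_cell_tags_eq)
    then show "chamber j = chamber j'" by (simp add: chamber_def torus_map_cell_shift_index)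
  qed
  moreover have "card (cell_tag ` cell_indices) \<le> card T" using \<open>finite T\<close> tags card_mono by blast
  moreover have "\<Union> (chamber ` cell_indices) = torus - (L1 \<union> L2 \<union> L3)"
  proof
    show "\<Union> (chamber ` cell_indices) \<subseteq> torus - (L1 \<union> L2 \<union> L3)"
      unfolding torus_minus_lines chamber_def using cell_subset_off_lines by blast
    show "torus - (L1 \<union> L2 \<union> L3) \<subseteq> \<Union> (chamber ` cell_indices)"
      unfolding torus_minus_lines chamber_def cell_indices_def using mem_cell_index by blast
  qed
  moreover have "connected (chamber j)" for j
    unfolding chamber_def
    by (rule connected_continuous_image[OF continuous_on_torus_map convex_connected[OF convex_cell]])
  ultimately show ?thesis
    using card_components_le_connected_cover[of "chamber ` cell_indices"] card_T by fastforce
qed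

end

section \<open>Concurrent lines\<close>

lemma det_dvd_if_Ints_imp:
  assumes "a * b' - a' * b \<noteq> 0"
    and "\<And>h. line_form a b 0 h \<in> \<int> \<Longrightarrow> line_form a' b' 0 h \<in> \<int> \<Longrightarrow> line_form a'' b'' 0 h \<in> \<int>"
  shows "(a * b' - a' * b) dvd (a * b'' - a'' * b)"
proof -
  define D where "D = real_of_int (a * b' - a' * b)"
  have D: "D \<noteq> 0" using assms(1) of_int_eq_0_iff unfolding D_def by blast
  define h where "h = (- of_int b / D, of_int a / D)"
  have "line_form a b 0 h = 0" "line_form a' b' 0 h = 1"
    using D by (simp_all add: line_form_def h_def field_simps) (simp add: D_def algebra_simps)
  then have "line_form a'' b'' 0 h \<in> \<int>" using assms(2) by simp
  moreover have "line_form a'' b'' 0 h = real_of_int (a * b'' - a'' * b) / D"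
    using D by (simp add: line_form_def h_def field_simps)
  ultimately obtain k where "real_of_int (a * b'' - a'' * b) / D = of_int k" by (auto elim: Ints_cases)
  then have "real_of_int (a * b'' - a'' * b) = of_int (k * (a * b' - a' * b))"
    using D by (simp add: D_def field_simps)
  then show ?thesis by (simp only: of_int_eq_iff) simp
qed

lemma det_nonzero_if_Ints_imp:
  assumes "a * b' - a' * b \<noteq> 0"
    and "\<And>h. line_form a b 0 h \<in> \<int> \<Longrightarrow> line_form a'' b'' 0 h \<in> \<int> \<Longrightarrow> line_form a' b' 0 h \<in> \<int>"
  shows "a * b'' - a'' * b \<noteq> 0"
proof
  assume det: "a * b'' - a'' * b = 0"
  define D where "D = real_of_int (a * b' - a' * b)"
  have D: "D \<noteq> 0" using assms(1) of_int_eq_0_iff unfolding D_def by blast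
  define h where "h = (- of_int b / (2 * D), of_int a / (2 * D))"
  have "line_form a b 0 h = 0" by (simp add: line_form_def h_def algebra_simps)
  moreover have "line_form a'' b'' 0 h = real_of_int (a * b'' - a'' * b) / (2 * D)"
    using D by (simp add: line_form_def h_def field_simps)
  ultimately have "line_form a' b' 0 h \<in> \<int>" using assms(2) det by simp
  moreover have "line_form a' b' 0 h = 1/2"
    using D by (simp add: line_form_def h_def field_simps) (simp add: D_def algebra_simps)
  ultimately show False using half_not_Ints by simp
qed

text \<open>The hypotheses make the three pairwise determinants divide each other, so they agree up to
  sign, and Cramer's rule expresses the third form through the other two.\<close>
lemma type_eq_pm_sum_if_Ints_imp:
  fixes a1 b1 a2 b2 a3 b3 :: int
  assumes "a1 * b2 - a2 * b1 \<noteq> 0"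
    and Ints12: "\<And>h. line_form a1 b1 0 h \<in> \<int> \<Longrightarrow> line_form a2 b2 0 h \<in> \<int> \<Longrightarrow> line_form a3 b3 0 h \<in> \<int>"
    and Ints13: "\<And>h. line_form a1 b1 0 h \<in> \<int> \<Longrightarrow> line_form a3 b3 0 h \<in> \<int> \<Longrightarrow> line_form a2 b2 0 h \<in> \<int>"
    and Ints23: "\<And>h. line_form a2 b2 0 h \<in> \<int> \<Longrightarrow> line_form a3 b3 0 h \<in> \<int> \<Longrightarrow> line_form a1 b1 0 h \<in> \<int>"
  obtains \<sigma> \<tau> :: int where "\<sigma> = 1 \<or> \<sigma> = -1" "\<tau> = 1 \<or> \<tau> = -1"
    "a3 = \<sigma> * a1 + \<tau> * a2" "b3 = \<sigma> * b1 + \<tau> * b2"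
proof -
  define D where "D = a1 * b2 - a2 * b1"
  have D: "D \<noteq> 0" using assms(1) by (simp add: D_def)
  have "a2 * b1 - a1 * b2 \<noteq> 0" using assms(1) by simp
  have D13: "a1 * b3 - a3 * b1 \<noteq> 0" by (rule det_nonzero_if_Ints_imp[OF assms(1) Ints13])
  have D23: "a2 * b3 - a3 * b2 \<noteq> 0"
    by (rule det_nonzero_if_Ints_imp[OF \<open>a2 * b1 - a1 * b2 \<noteq> 0\<close>]) (use Ints23 in blast)
  have pm: "\<exists>\<sigma>::int. (\<sigma> = 1 \<or> \<sigma> = -1) \<and> x = \<sigma> * D" if "\<bar>x\<bar> = \<bar>D\<bar>" for x
  proof -
    from that have "x = D \<or> x = - D" by (simp add: abs_eq_iff)
    then show ?thesis by (metis mult_1 mult_minus1)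
  qed
  have "\<bar>a1 * b3 - a3 * b1\<bar> = \<bar>D\<bar>" unfolding D_def
    by (intro zdvd_antisym_abs det_dvd_if_Ints_imp[OF D13 Ints13] det_dvd_if_Ints_imp[OF assms(1) Ints12])
  moreover have "\<bar>a3 * b2 - a2 * b3\<bar> = \<bar>D\<bar>"
  proof -
    have "\<bar>a2 * b3 - a3 * b2\<bar> = \<bar>a2 * b1 - a1 * b2\<bar>"
      by (intro zdvd_antisym_abs det_dvd_if_Ints_imp[OF D23] det_dvd_if_Ints_imp[OF \<open>a2 * b1 - a1 * b2 \<noteq> 0\<close>])
         (use Ints12 Ints23 in blast)+
    then show ?thesis by (simp add: D_def abs_minus_commute)
  qed
  ultimately obtain \<sigma> \<tau> where \<sigma>\<tau>: "\<sigma> = 1 \<or> \<sigma> = -1" "\<tau> = 1 \<or> \<tau> = -1"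
    "a3 * b2 - a2 * b3 = \<sigma> * D" "a1 * b3 - a3 * b1 = \<tau> * D"
    using pm by metis
  have "D * a3 = D * (\<sigma> * a1 + \<tau> * a2)" "D * b3 = D * (\<sigma> * b1 + \<tau> * b2)"
    using \<sigma>\<tau>(3,4) unfolding D_def by algebra+
  then show thesis using that \<sigma>\<tau>(1,2) D by simp
qed

lemma even_if_Ints_line_form:
  assumes "line_form a b 0 h \<in> \<int>" "2 *\<^sub>R h = int_point (M, N)"
  shows "even (a * M + b * N)"
proof -
  obtain k where k: "line_form a b 0 h = of_int k" using assms(1) by (auto elim: Ints_cases)
  have "2 * line_form a b 0 h = line_form a b 0 (2 *\<^sub>R h)" by (simp add: line_form_def algebra_simps)
  then have "real_of_int (2 * k) = of_int (a * M + b * N)"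
    using k assms(2) by (simp add: line_form_def int_point_def)
  then show ?thesis by (simp only: of_int_eq_iff) (metis dvd_triv_left)
qed

context three_lines
begin

lemma pairwise_intersections_eq_if_card_chambers:
  assumes "card (L1 \<inter> L2 \<union> L1 \<inter> L3 \<union> L2 \<inter> L3) = f0" "0 < f0"
    and "card (components (torus - (L1 \<union> L2 \<union> L3))) = 2 * f0"
  shows "L1 \<inter> L3 = L1 \<inter> L2" "L2 \<inter> L3 = L1 \<inter> L2"
proof -
  define X where "X = L1 \<inter> L2"
  define Y where "Y = L1 \<inter> L3 \<union> L2 \<inter> L3"
  have V: "L1 \<inter> L2 \<union> L1 \<inter> L3 \<union> L2 \<inter> L3 = X \<union> Y" by (auto simp: X_def Y_def)
  have "finite (X \<union> Y)" using assms(1,2) V card_ge_0_finite by metis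
  then have fin: "finite X" "finite Y" by auto
  have "card X \<le> card (X \<union> Y)" "card Y \<le> card (X \<union> Y)"
    using \<open>finite (X \<union> Y)\<close> by (auto intro: card_mono)
  moreover have "2 * f0 \<le> card X + card Y"
    using card_chambers_le[OF fin[unfolded X_def Y_def]] assms(3) unfolding X_def Y_def by simp
  ultimately have "card X = card (X \<union> Y)" "card Y = card (X \<union> Y)"
    using assms(1) unfolding V by linarith+
  then have "X = X \<union> Y" "Y = X \<union> Y"
    using card_subset_eq[OF \<open>finite (X \<union> Y)\<close>] by (metis Un_upper1, metis Un_upper2)
  then have "X = Y" by simp
  then show "L1 \<inter> L3 = L1 \<inter> L2" "L2 \<inter> L3 = L1 \<inter> L2" unfolding X_def Y_def by blast+
qed

lemma intersection_L1_L2_liftE: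
  assumes "x \<in> L1 \<inter> L2"
  obtains p where "x = torus_map p" "l1 p \<in> \<int>" "l2 p \<in> \<int>"
proof -
  have "x \<in> torus" using assms tline_subset_torus by blast
  then obtain p where "x = torus_map p" by (auto simp: torus_def)
  then show thesis using assms that by (simp add: torus_map_in_lines_iff)
qed

lemma Ints_line_forms_if_concurrent:
  assumes "L1 \<inter> L3 = L1 \<inter> L2" "L2 \<inter> L3 = L1 \<inter> L2"
  shows "l1 p \<in> \<int> \<Longrightarrow> l2 p \<in> \<int> \<Longrightarrow> l3 p \<in> \<int>" "l1 p \<in> \<int> \<Longrightarrow> l3 p \<in> \<int> \<Longrightarrow> l2 p \<in> \<int>"
    "l2 p \<in> \<int> \<Longrightarrow> l3 p \<in> \<int> \<Longrightarrow> l1 p \<in> \<int>"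
proof -
  have "torus_map p \<in> L1 \<inter> L2 \<longleftrightarrow> torus_map p \<in> L1 \<inter> L3"
    "torus_map p \<in> L1 \<inter> L2 \<longleftrightarrow> torus_map p \<in> L2 \<inter> L3"
    using assms by simp_all
  then show "l1 p \<in> \<int> \<Longrightarrow> l2 p \<in> \<int> \<Longrightarrow> l3 p \<in> \<int>" "l1 p \<in> \<int> \<Longrightarrow> l3 p \<in> \<int> \<Longrightarrow> l2 p \<in> \<int>"
    "l2 p \<in> \<int> \<Longrightarrow> l3 p \<in> \<int> \<Longrightarrow> l1 p \<in> \<int>"
    by (simp_all add: torus_map_in_lines_iff)
qed

text \<open>Translating by the difference from a triple point \<open>w\<close> turns the concurrency of the
  three lines into the same property of the three lattices of the linear forms.\<close>
lemma Ints_linear_forms_if_concurrent: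
  assumes "L1 \<inter> L3 = L1 \<inter> L2" "L2 \<inter> L3 = L1 \<inter> L2" "l1 w \<in> \<int>" "l2 w \<in> \<int>"
  shows "line_form a1 b1 0 h \<in> \<int> \<Longrightarrow> line_form a2 b2 0 h \<in> \<int> \<Longrightarrow> line_form a3 b3 0 h \<in> \<int>"
    "line_form a1 b1 0 h \<in> \<int> \<Longrightarrow> line_form a3 b3 0 h \<in> \<int> \<Longrightarrow> line_form a2 b2 0 h \<in> \<int>"
    "line_form a2 b2 0 h \<in> \<int> \<Longrightarrow> line_form a3 b3 0 h \<in> \<int> \<Longrightarrow> line_form a1 b1 0 h \<in> \<int>"
proof -
  note concurrent = Ints_line_forms_if_concurrent[OF assms(1,2)]
  have "l3 w \<in> \<int>" using concurrent(1) assms(3,4) .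
  then show "line_form a1 b1 0 h \<in> \<int> \<Longrightarrow> line_form a2 b2 0 h \<in> \<int> \<Longrightarrow> line_form a3 b3 0 h \<in> \<int>"
    "line_form a1 b1 0 h \<in> \<int> \<Longrightarrow> line_form a3 b3 0 h \<in> \<int> \<Longrightarrow> line_form a2 b2 0 h \<in> \<int>"
    "line_form a2 b2 0 h \<in> \<int> \<Longrightarrow> line_form a3 b3 0 h \<in> \<int> \<Longrightarrow> line_form a1 b1 0 h \<in> \<int>"
    using concurrent[of "w + h"] assms(3,4) by (simp_all add: line_form_add Ints_add_left_iff)
qed

lemma types_parity_if_concurrent:
  assumes "L1 \<inter> L3 = L1 \<inter> L2" "L2 \<inter> L3 = L1 \<inter> L2" "l1 w \<in> \<int>" "l2 w \<in> \<int>"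
  shows "even (a3 - a1 - a2)" "even (b3 - b1 - b2)"
proof -
  obtain \<sigma> \<tau> :: int where "\<sigma> = 1 \<or> \<sigma> = -1" "\<tau> = 1 \<or> \<tau> = -1"
    and \<sigma>\<tau>: "a3 = \<sigma> * a1 + \<tau> * a2" "b3 = \<sigma> * b1 + \<tau> * b2"
    using Ints_linear_forms_if_concurrent[OF assms] by (rule type_eq_pm_sum_if_Ints_imp[OF det12_nonzero])
  then have "even (\<sigma> - 1)" "even (\<tau> - 1)" by auto
  moreover have "a3 - a1 - a2 = (\<sigma> - 1) * a1 + (\<tau> - 1) * a2" "b3 - b1 - b2 = (\<sigma> - 1) * b1 + (\<tau> - 1) * b2"
    by (simp_all add: \<sigma>\<tau> algebra_simps)
  ultimately show "even (a3 - a1 - a2)" "even (b3 - b1 - b2)" by simp_all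
qed

lemma reflection_fixed_point_if_concurrent:
  assumes "L1 \<inter> L3 = L1 \<inter> L2" "L2 \<inter> L3 = L1 \<inter> L2" "l1 w \<in> \<int>" "l2 w \<in> \<int>"
    and "l1 p \<in> \<int>" "l2 p \<in> \<int>" "torus_map (2 *\<^sub>R w - p) = torus_map p"
  shows "torus_map p = torus_map w"
proof -
  obtain z where z: "2 *\<^sub>R w - p = p + int_point z" using assms(7) by (rule torus_map_eqE)
  define h where "h = p - w"
  have "2 *\<^sub>R h = int_point (- fst z, - snd z)" using z by (simp add: h_def int_point_def prod_eq_iff)
  moreover have "line_form a1 b1 0 h \<in> \<int>" "line_form a2 b2 0 h \<in> \<int>"
    using assms(3-6) line_form_add[of _ _ _ w h] by (simp_all add: h_def Ints_add_left_iff)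
  moreover have "line_form a3 b3 0 h \<in> \<int>"
    using Ints_linear_forms_if_concurrent(1)[OF assms(1-4)] calculation(2,3) .
  ultimately have "even (- fst z) \<and> even (- snd z)"
    using even_if_even_line_forms[OF odd_or_odd_if_coprime[OF coprime1] odd_or_odd_if_coprime[OF coprime2]
        odd_or_odd_if_coprime[OF coprime3] types_parity_if_concurrent[OF assms(1-4)]]
      even_if_Ints_line_form by blast
  then obtain M N where "fst z = 2 * M" "snd z = 2 * N" by (auto elim!: evenE)
  then have "p = w + int_point (- M, - N)" using z by (simp add: prod_eq_iff int_point_def algebra_simps)
  then show ?thesis by simp
qed

lemma odd_card_if_concurrent:
  assumes "L1 \<inter> L3 = L1 \<inter> L2" "L2 \<inter> L3 = L1 \<inter> L2" "finite (L1 \<inter> L2)" "L1 \<inter> L2 \<noteq> {}"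
  shows "odd (card (L1 \<inter> L2))"
proof -
  obtain w where w: "l1 w \<in> \<int>" "l2 w \<in> \<int>"
    using assms(4) intersection_L1_L2_liftE by (metis all_not_in_conv)
  then have vertex_w: "torus_map w \<in> L1 \<inter> L2" by (simp add: torus_map_in_lines_iff)
  obtain \<rho> where \<rho>: "\<And>p. \<rho> (torus_map p) = torus_map (2 *\<^sub>R w - p)"
    using torus_reflectionE[of w] by blast
  have reflect: "l1 (2 *\<^sub>R w - p) \<in> \<int> \<and> l2 (2 *\<^sub>R w - p) \<in> \<int>" if "l1 p \<in> \<int>" "l2 p \<in> \<int>" for p
  proof -
    have "line_form a b c (2 *\<^sub>R w - p) = 2 * line_form a b c w - line_form a b c p" for a b c
      by (simp add: line_form_def algebra_simps)
    then show ?thesis using that w by simp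
  qed
  show ?thesis
  proof (rule odd_card_involution[OF assms(3)])
    show "\<forall>x\<in>L1 \<inter> L2. \<rho> x \<in> L1 \<inter> L2 \<and> \<rho> (\<rho> x) = x"
    proof
      fix x assume "x \<in> L1 \<inter> L2"
      then obtain p where p: "x = torus_map p" "l1 p \<in> \<int>" "l2 p \<in> \<int>" by (rule intersection_L1_L2_liftE)
      then show "\<rho> x \<in> L1 \<inter> L2 \<and> \<rho> (\<rho> x) = x"
        using reflect[OF p(2,3)] \<rho> by (simp add: torus_map_in_lines_iff)
    qed
    show "{x \<in> L1 \<inter> L2. \<rho> x = x} = {torus_map w}"
    proof (intro equalityI subsetI)
      fix x assume "x \<in> {x \<in> L1 \<inter> L2. \<rho> x = x}"
      then obtain p where "x = torus_map p" "l1 p \<in> \<int>" "l2 p \<in> \<int>" "\<rho> x = x"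
        using intersection_L1_L2_liftE by blast
      then show "x \<in> {torus_map w}"
        using reflection_fixed_point_if_concurrent[OF assms(1,2) w] \<rho> by simp
    next
      fix x assume "x \<in> {torus_map w}"
      then show "x \<in> {x \<in> L1 \<inter> L2. \<rho> x = x}" using vertex_w \<rho>[of w] by (simp add: scaleR_2)
    qed
  qed
qed

lemma odd_if_card_chambers_eq_twice_card_vertices:
  assumes "L1 \<noteq> L2" "L1 \<noteq> L3" "L2 \<noteq> L3"
    and "card (arr_vertices {L1, L2, L3}) = f0" "0 < f0" "card (arr_chambers {L1, L2, L3}) = 2 * f0"
  shows "odd f0"
proof -
  have vertices: "arr_vertices {L1, L2, L3} = L1 \<inter> L2 \<union> L1 \<inter> L3 \<union> L2 \<inter> L3"
    using assms(1-3) tline_subset_torus by (intro arr_vertices_three) auto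
  have "card (components (torus - (L1 \<union> L2 \<union> L3))) = 2 * f0"
    using assms(6) by (simp add: arr_chambers_def Un_assoc)
  then have concurrent: "L1 \<inter> L3 = L1 \<inter> L2" "L2 \<inter> L3 = L1 \<inter> L2"
    using pairwise_intersections_eq_if_card_chambers assms(4,5) vertices by metis+
  then have "card (L1 \<inter> L2) = f0" using assms(4) vertices by simp
  then have "finite (L1 \<inter> L2)" "L1 \<inter> L2 \<noteq> {}" using assms(5) by (auto intro: card_ge_0_finite)
  then show ?thesis using odd_card_if_concurrent[OF concurrent] \<open>card (L1 \<inter> L2) = f0\<close> by simp
qed

end

section \<open>An arrangement with an odd number of vertices\<close>

definition turn :: "complex \<Rightarrow> real" where
  "turn u = Arg2pi u / (2 * pi)"

lemma turn_cis_2pi: "turn (cis (2 * pi * t)) = frac t"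
proof -
  have "0 \<le> 2 * pi * frac t" "2 * pi * frac t < 2 * pi"
    using frac_ge_0[of t] frac_lt_1[of t] pi_gt_zero by (auto simp: mult_less_cancel_left)
  moreover have "cis (2 * pi * frac t) = cis (2 * pi * t)"
    unfolding cis_2pi_eq_iff by (simp add: frac_def)
  then have "of_real 1 * exp (\<i> * of_real (2 * pi * frac t)) = cis (2 * pi * t)"
    by (simp add: cis_conv_exp)
  ultimately have "Arg2pi (cis (2 * pi * t)) = 2 * pi * frac t"
    using Arg2pi_unique by (metis zero_less_one)
  then show ?thesis by (simp add: turn_def)
qed

lemma cis_2pi_notin_nonneg_Reals: "t \<notin> \<int> \<Longrightarrow> cis (2 * pi * t) \<notin> \<real>\<^sub>\<ge>\<^sub>0"
proof
  assume t: "t \<notin> \<int>" and "cis (2 * pi * t) \<in> \<real>\<^sub>\<ge>\<^sub>0"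
  then obtain r where r: "cis (2 * pi * t) = of_real r" "r \<ge> 0" by (auto simp: nonneg_Reals_def)
  then have "norm (of_real r :: complex) = 1" by (metis norm_cis)
  then have "r = 1" using r(2) by simp
  then have "cis (2 * pi * t) = cis (2 * pi * 0)" using r(1) by simp
  then show False using t unfolding cis_2pi_eq_iff by simp
qed

lemma isCont_turn: "t \<notin> \<int> \<Longrightarrow> isCont turn (cis (2 * pi * t))"
  unfolding turn_def by (intro continuous_intros continuous_at_Arg2pi cis_2pi_notin_nonneg_Reals) auto

lemma cis_2pi_divide_inj:
  fixes k k' :: int and n :: nat
  assumes "0 < n" "\<bar>k - k'\<bar> < int n" "cis (2 * pi * (of_int k / real n)) = cis (2 * pi * (of_int k' / real n))"
  shows "k = k'"
proof -
  obtain m where "of_int k / real n - of_int k' / real n = of_int m"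
    using assms(3) unfolding cis_2pi_eq_iff by (auto elim: Ints_cases)
  then have "real_of_int (k - k') = of_int (m * int n)" using assms(1) by (simp add: field_simps)
  then have "k - k' = m * int n" by (simp only: of_int_eq_iff)
  moreover have "m \<noteq> 0 \<Longrightarrow> int n \<le> \<bar>m * int n\<bar>" using assms(1) by (simp add: abs_mult)
  ultimately show ?thesis using assms(2) by fastforce
qed

lemma cis_2pi_int_divide_eq:
  assumes "0 < n"
  obtains k where "k < n" "cis (2 * pi * (of_int K / real n)) = cis (2 * pi * (real k / real n))"
proof -
  define k where "k = nat (K mod int n)"
  have "0 \<le> K mod int n" "K mod int n < int n" using assms by simp_all
  then have k: "int k = K mod int n" "k < n" unfolding k_def by linarith+
  have "K = int n * (K div int n) + int k" using k(1) by simp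
  then have "real_of_int K = real n * of_int (K div int n) + real k"
    by (metis of_int_add of_int_mult of_int_of_nat_eq)
  then have "of_int K / real n - real k / real n = of_int (K div int n)"
    using assms by (simp add: field_simps)
  then have "cis (2 * pi * (of_int K / real n)) = cis (2 * pi * (real k / real n))"
    unfolding cis_2pi_eq_iff by (metis Ints_of_int)
  then show thesis using k(2) that by blast
qed

locale odd_construction =
  fixes n :: nat
  assumes odd_n: "odd n"
begin

lemma n_pos: "0 < n"
  using odd_n by (cases n) auto

sublocale three_lines 0 1 "int n" 1 "int n" 2 0 0 0
  by unfold_locales (use n_pos odd_n in \<open>auto simp: coprime_commute\<close>)

lemma line_forms_odd_construction:
  "line_form 0 1 0 p = snd p" "line_form (int n) 1 0 p = real n * fst p + snd p"
  "line_form (int n) 2 0 p = real n * fst p + 2 * snd p"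
  by (simp_all add: line_form_def)

definition vertex_set :: "(complex \<times> complex) set" where
  "vertex_set = (\<lambda>k. torus_map (real k / real n, 0)) ` {..<n}"

lemma card_vertex_set: "card vertex_set = n"
proof -
  have "inj_on (\<lambda>k. torus_map (real k / real n, 0)) {..<n}"
  proof
    fix k k' assume kk: "k \<in> {..<n}" "k' \<in> {..<n}"
      "torus_map (real k / real n, 0) = torus_map (real k' / real n, 0)"
    then have "cis (2 * pi * (of_int (int k) / real n)) = cis (2 * pi * (of_int (int k') / real n))"
      by (simp add: torus_map_def)
    then have "int k = int k'" using kk(1,2) n_pos by (intro cis_2pi_divide_inj[of n]) auto
    then show "k = k'" by simp
  qed
  then show ?thesis by (simp add: vertex_set_def card_image)
qed

lemma torus_map_in_vertex_set_iff: "torus_map p \<in> vertex_set \<longleftrightarrow> snd p \<in> \<int> \<and> real n * fst p \<in> \<int>"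
proof
  assume "torus_map p \<in> vertex_set"
  then obtain k where "torus_map p = torus_map (real k / real n, 0)" by (auto simp: vertex_set_def)
  then have "fst p - real k / real n \<in> \<int>" "snd p \<in> \<int>" by (auto simp: torus_map_eq_iff)
  then obtain m where "fst p - real k / real n = of_int m" by (auto elim: Ints_cases)
  then have "real n * fst p = of_int (int k + m * int n)" using n_pos by (simp add: field_simps)
  then show "snd p \<in> \<int> \<and> real n * fst p \<in> \<int>" using \<open>snd p \<in> \<int>\<close> by simp
next
  assume p: "snd p \<in> \<int> \<and> real n * fst p \<in> \<int>"
  then obtain K where K: "real n * fst p = of_int K" by (auto elim: Ints_cases)
  obtain k where k: "k < n" "cis (2 * pi * (of_int K / real n)) = cis (2 * pi * (real k / real n))"
    using cis_2pi_int_divide_eq[OF n_pos] .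
  have "fst p = of_int K / real n" using K n_pos by (simp add: field_simps)
  then have "torus_map p = torus_map (real k / real n, 0)"
    using k(2) p by (simp add: torus_map_eq_iff cis_2pi_eq_iff[symmetric])
  then show "torus_map p \<in> vertex_set" using k(1) by (auto simp: vertex_set_def)
qed

lemma intersections_eq_vertex_set: "L1 \<inter> L2 = vertex_set" "L1 \<inter> L3 = vertex_set" "L2 \<inter> L3 = vertex_set"
proof -
  have double: "x \<in> \<int> \<Longrightarrow> 2 * x \<in> \<int>" for x :: real by (metis Ints_add mult_2)
  have L: "torus_map p \<in> L1 \<longleftrightarrow> snd p \<in> \<int>" "torus_map p \<in> L2 \<longleftrightarrow> real n * fst p + snd p \<in> \<int>"
    "torus_map p \<in> L3 \<longleftrightarrow> real n * fst p + 2 * snd p \<in> \<int>" for p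
    using torus_map_in_lines_iff line_forms_odd_construction by auto
  have iff: "torus_map p \<in> L1 \<inter> L2 \<longleftrightarrow> torus_map p \<in> vertex_set"
    "torus_map p \<in> L1 \<inter> L3 \<longleftrightarrow> torus_map p \<in> vertex_set"
    "torus_map p \<in> L2 \<inter> L3 \<longleftrightarrow> torus_map p \<in> vertex_set" for p
  proof -
    have e1: "real n * fst p = (real n * fst p + snd p) - snd p" by simp
    have e2: "real n * fst p = (real n * fst p + 2 * snd p) - 2 * snd p" by simp
    have e3: "snd p = (real n * fst p + 2 * snd p) - (real n * fst p + snd p)" by simp
    have e4: "real n * fst p = 2 * (real n * fst p + snd p) - (real n * fst p + 2 * snd p)" by simp
    show "torus_map p \<in> L1 \<inter> L2 \<longleftrightarrow> torus_map p \<in> vertex_set"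
      unfolding Int_iff L torus_map_in_vertex_set_iff by (metis e1 Ints_add Ints_diff)
    show "torus_map p \<in> L1 \<inter> L3 \<longleftrightarrow> torus_map p \<in> vertex_set"
      unfolding Int_iff L torus_map_in_vertex_set_iff by (metis e2 double Ints_add Ints_diff)
    show "torus_map p \<in> L2 \<inter> L3 \<longleftrightarrow> torus_map p \<in> vertex_set"
      unfolding Int_iff L torus_map_in_vertex_set_iff by (metis e3 e4 double Ints_add Ints_diff)
  qed
  have "vertex_set \<subseteq> torus" by (auto simp: vertex_set_def torus_def)
  then show "L1 \<inter> L2 = vertex_set" "L1 \<inter> L3 = vertex_set" "L2 \<inter> L3 = vertex_set"
    using tline_subset_torus iff by (metis (no_types, lifting) le_infI1 torus_subset_eqI)+
qed

definition unit_roots :: "complex set" where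
  "unit_roots = (\<lambda>k. cis (2 * pi * (real k / real n))) ` {..<n}"

lemma card_unit_roots: "card unit_roots = n"
proof -
  have "inj_on (\<lambda>k. cis (2 * pi * (real k / real n))) {..<n}"
  proof
    fix k k' assume "k \<in> {..<n}" "k' \<in> {..<n}"
      "cis (2 * pi * (real k / real n)) = cis (2 * pi * (real k' / real n))"
    then have "int k = int k'" using n_pos by (intro cis_2pi_divide_inj[of n]) auto
    then show "k = k'" by simp
  qed
  then show ?thesis by (simp add: unit_roots_def card_image)
qed

text \<open>Writing \<open>A = y\<close> and \<open>B = nx + y\<close> for a lift \<open>(x, y)\<close>, the first component is the carry
  in \<open>frac A + frac B\<close>, the second one \<open>e^{2\<pi>ix}\<close> corrected by \<open>frac B - frac A\<close> to an
  \<open>n\<close>-th root of unity.\<close>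
definition chamber_label :: "complex \<times> complex \<Rightarrow> real \<times> complex" where
  "chamber_label q = (turn (snd q) + turn (fst q ^ n * snd q) - turn (fst q ^ n * (snd q)^2),
     fst q * cis (- (2 * pi * (turn (fst q ^ n * snd q) - turn (snd q))) / real n))"

lemma torus_map_powers:
  "fst (torus_map p) ^ n * snd (torus_map p) = cis (2 * pi * (real n * fst p + snd p))"
  "fst (torus_map p) ^ n * (snd (torus_map p))^2 = cis (2 * pi * (real n * fst p + 2 * snd p))"
  "snd (torus_map p) = cis (2 * pi * snd p)" "fst (torus_map p) = cis (2 * pi * fst p)"
proof -
  obtain x y where p: "p = (x, y)" by (cases p)
  have "cis (2 * pi * x) ^ n * cis (2 * pi * y) = cis (real n * (2 * pi * x) + 2 * pi * y)"
    by (simp add: Complex.DeMoivre cis_mult)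
  also have "real n * (2 * pi * x) + 2 * pi * y = 2 * pi * (real n * x + y)" by (simp add: algebra_simps)
  finally show "fst (torus_map p) ^ n * snd (torus_map p) = cis (2 * pi * (real n * fst p + snd p))"
    by (simp add: p torus_map_def)
  have "cis (2 * pi * x) ^ n * (cis (2 * pi * y))^2 = cis (real n * (2 * pi * x) + real 2 * (2 * pi * y))"
    by (simp only: Complex.DeMoivre cis_mult)
  also have "real n * (2 * pi * x) + real 2 * (2 * pi * y) = 2 * pi * (real n * x + 2 * y)" by (simp add: algebra_simps)
  finally show "fst (torus_map p) ^ n * (snd (torus_map p))^2 = cis (2 * pi * (real n * fst p + 2 * snd p))"
    by (simp add: p torus_map_def)
  show "snd (torus_map p) = cis (2 * pi * snd p)" "fst (torus_map p) = cis (2 * pi * fst p)"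
    by (simp_all add: p torus_map_def)
qed

lemma chamber_label_torus_map:
  "chamber_label (torus_map p) =
     (frac (snd p) + frac (real n * fst p + snd p) - frac (real n * fst p + 2 * snd p),
      cis (2 * pi * fst p) * cis (- (2 * pi * (frac (real n * fst p + snd p) - frac (snd p))) / real n))"
  unfolding chamber_label_def torus_map_powers(1,2) by (simp add: torus_map_powers(3,4) turn_cis_2pi)

lemma chamber_label_mem: "chamber_label (torus_map p) \<in> {0, 1} \<times> unit_roots"
proof -
  define A where "A = snd p"
  define B where "B = real n * fst p + snd p"
  have AB: "real n * fst p + 2 * snd p = A + B" by (simp add: A_def B_def)
  have "chamber_label (torus_map p) =
      (frac A + frac B - frac (A + B), cis (2 * pi * fst p) * cis (- (2 * pi * (frac B - frac A)) / real n))"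
    unfolding chamber_label_torus_map AB by (simp add: A_def B_def)
  moreover have "frac A + frac B - frac (A + B) \<in> {0, 1}" by (simp add: frac_add)
  moreover have "2 * pi * fst p + - (2 * pi * (frac B - frac A)) / real n =
      2 * pi * (of_int (\<lfloor>B\<rfloor> - \<lfloor>A\<rfloor>) / real n)"
    using n_pos by (simp add: frac_def B_def A_def field_simps)
  then obtain k where "k < n"
    "cis (2 * pi * fst p) * cis (- (2 * pi * (frac B - frac A)) / real n) = cis (2 * pi * (real k / real n))"
    using cis_2pi_int_divide_eq[OF n_pos] by (metis cis_mult)
  ultimately show ?thesis by (auto simp: unit_roots_def)
qed

lemma continuous_on_chamber_label: "continuous_on (torus - (L1 \<union> L2 \<union> L3)) chamber_label"
proof (rule continuous_at_imp_continuous_on, rule ballI)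
  fix q assume "q \<in> torus - (L1 \<union> L2 \<union> L3)"
  then obtain p where p: "p \<in> off_lines" "q = torus_map p" using torus_minus_lines by auto
  then have nz: "snd p \<notin> \<int>" "real n * fst p + snd p \<notin> \<int>" "real n * fst p + 2 * snd p \<notin> \<int>"
    by (auto simp: off_lines_def line_forms_odd_construction)
  have isCont_cis: "isCont cis x" for x
    using continuous_on_eq_continuous_at[of UNIV cis] continuous_on_cis[of UNIV "\<lambda>x. x"] by simp
  have t: "isCont turn (snd q)" "isCont turn (fst q ^ n * snd q)" "isCont turn (fst q ^ n * (snd q)^2)"
    unfolding p torus_map_powers(1,2) unfolding torus_map_powers(3) using nz by (simp_all add: isCont_turn)
  have c1: "isCont (\<lambda>q. turn (snd q)) q" by (rule isCont_o2[where f = snd, OF _ t(1)]) (intro continuous_intros)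
  have c2: "isCont (\<lambda>q. turn (fst q ^ n * snd q)) q" by (rule isCont_o2[where f = "\<lambda>q. fst q ^ n * snd q", OF _ t(2)]) (intro continuous_intros)
  have c3: "isCont (\<lambda>q. turn (fst q ^ n * (snd q)^2)) q" by (rule isCont_o2[where f = "\<lambda>q. fst q ^ n * (snd q)^2", OF _ t(3)]) (intro continuous_intros)
  have c4: "isCont (\<lambda>q. cis (- (2 * pi * (turn (fst q ^ n * snd q) - turn (snd q))) / real n)) q"
    by (rule isCont_o2[OF _ isCont_cis]) (use n_pos in \<open>intro continuous_intros c1 c2, auto\<close>)
  show "isCont chamber_label q" unfolding chamber_label_def
    by (intro continuous_intros c1 c2 c3 c4)
qed

definition sample0 :: "nat \<Rightarrow> real \<times> real" where
  "sample0 k = ((real k + 1/4) / real n, 1/4)"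

definition sample1 :: "nat \<Rightarrow> real \<times> real" where
  "sample1 k = ((real k - 1/4) / real n, 3/4)"

lemma frac_not_Ints: "frac x = c \<Longrightarrow> c \<noteq> 0 \<Longrightarrow> x \<notin> \<int>"
  using frac_eq_0_iff[of x] by auto

lemma off_lines_sample0: "sample0 k \<in> off_lines"
  and chamber_label_sample0: "chamber_label (torus_map (sample0 k)) = (0, cis (2 * pi * (real k / real n)))"
proof -
  have a: "real n * fst (sample0 k) + snd (sample0 k) = real k + 1/2"
    "real n * fst (sample0 k) + 2 * snd (sample0 k) = real k + 3/4" "snd (sample0 k) = 1/4"
    using n_pos by (simp_all add: sample0_def field_simps)
  have f: "frac (real k + 1/2) = 1/2" "frac (real k + 3/4) = 3/4" "frac (1/4 :: real) = 1/4"
    by (rule iffD2[OF frac_unique_iff], simp)+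
  have "snd (sample0 k) \<notin> \<int>" unfolding a(3) by (rule frac_not_Ints[OF f(3)]) simp
  moreover have "real n * fst (sample0 k) + snd (sample0 k) \<notin> \<int>" unfolding a(1) by (rule frac_not_Ints[OF f(1)]) simp
  moreover have "real n * fst (sample0 k) + 2 * snd (sample0 k) \<notin> \<int>" unfolding a(2) by (rule frac_not_Ints[OF f(2)]) simp
  ultimately show "sample0 k \<in> off_lines" by (simp add: off_lines_def line_forms_odd_construction)
  have "2 * pi * fst (sample0 k) + - (2 * pi * (1/2 - 1/4)) / real n = 2 * pi * (real k / real n)"
    using n_pos by (simp add: sample0_def field_simps)
  then show "chamber_label (torus_map (sample0 k)) = (0, cis (2 * pi * (real k / real n)))"
    unfolding chamber_label_torus_map a(1,2) unfolding a(3) f by (simp add: cis_mult)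
qed

lemma off_lines_sample1: "sample1 k \<in> off_lines"
  and chamber_label_sample1: "chamber_label (torus_map (sample1 k)) = (1, cis (2 * pi * (real k / real n)))"
proof -
  have a: "real n * fst (sample1 k) + snd (sample1 k) = real k + 1/2"
    "real n * fst (sample1 k) + 2 * snd (sample1 k) = real (k + 1) + 1/4" "snd (sample1 k) = 3/4"
    using n_pos by (simp_all add: sample1_def field_simps)
  have f: "frac (real k + 1/2) = 1/2" "frac (real (k + 1) + 1/4) = 1/4" "frac (3/4 :: real) = 3/4"
    by (rule iffD2[OF frac_unique_iff], simp)+
  have "snd (sample1 k) \<notin> \<int>" unfolding a(3) by (rule frac_not_Ints[OF f(3)]) simp
  moreover have "real n * fst (sample1 k) + snd (sample1 k) \<notin> \<int>" unfolding a(1) by (rule frac_not_Ints[OF f(1)]) simp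
  moreover have "real n * fst (sample1 k) + 2 * snd (sample1 k) \<notin> \<int>" unfolding a(2) by (rule frac_not_Ints[OF f(2)]) simp
  ultimately show "sample1 k \<in> off_lines" by (simp add: off_lines_def line_forms_odd_construction)
  have "2 * pi * fst (sample1 k) + - (2 * pi * (1/2 - 3/4)) / real n = 2 * pi * (real k / real n)"
    using n_pos by (simp add: sample1_def field_simps)
  then show "chamber_label (torus_map (sample1 k)) = (1, cis (2 * pi * (real k / real n)))"
    unfolding chamber_label_torus_map a(1,2) unfolding a(3) f by (simp add: cis_mult)
qed

lemma card_chambers_odd_construction: "card (components (torus - (L1 \<union> L2 \<union> L3))) = 2 * n"
proof -
  let ?S = "torus - (L1 \<union> L2 \<union> L3)"
  have "finite vertex_set" by (simp add: vertex_set_def)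
  then have upper: "finite (components ?S)" "card (components ?S) \<le> 2 * n"
    using card_chambers_le intersections_eq_vertex_set card_vertex_set by simp_all
  have "({0, 1} :: real set) \<times> unit_roots \<subseteq> chamber_label ` ?S"
  proof
    fix v assume "v \<in> ({0, 1} :: real set) \<times> unit_roots"
    then obtain k where "v = (0, cis (2 * pi * (real k / real n))) \<or> v = (1, cis (2 * pi * (real k / real n)))"
      by (auto simp: unit_roots_def)
    then show "v \<in> chamber_label ` ?S"
      unfolding torus_minus_lines
      using off_lines_sample0 off_lines_sample1 chamber_label_sample0 chamber_label_sample1 by (metis image_eqI)
  qed
  moreover have "chamber_label ` ?S \<subseteq> ({0, 1} :: real set) \<times> unit_roots"
  proof
    fix v assume "v \<in> chamber_label ` ?S"
    then obtain p where "v = chamber_label (torus_map p)" unfolding torus_minus_lines by blast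
    then show "v \<in> ({0, 1} :: real set) \<times> unit_roots" using chamber_label_mem by simp
  qed
  ultimately have labels: "chamber_label ` ?S = ({0, 1} :: real set) \<times> unit_roots" by (rule subset_antisym[rotated])
  have "finite (({0, 1} :: real set) \<times> unit_roots)" by (simp add: unit_roots_def)
  then have "card (chamber_label ` ?S) \<le> card (components ?S)"
    using card_image_le_card_components[OF continuous_on_chamber_label _ upper(1)] labels by simp
  then show ?thesis using upper(2) card_unit_roots labels by (simp add: card_cartesian_product)
qed

lemma lines_distinct: "L1 \<noteq> L2" "L1 \<noteq> L3" "L2 \<noteq> L3"
proof -
  have "torus_map (1 / (2 * real n), 0) \<in> L1" "torus_map (1 / (2 * real n), 0) \<notin> L2"
    "torus_map (1 / (2 * real n), 0) \<notin> L3" "torus_map (0, 1/2) \<notin> L2" "torus_map (0, 1/2) \<in> L3"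
    using n_pos half_not_Ints by (simp_all add: torus_map_in_lines_iff line_forms_odd_construction)
  then show "L1 \<noteq> L2" "L1 \<noteq> L3" "L2 \<noteq> L3" by blast+
qed

lemma toric_arrangement_odd_construction: "toric_arrangement {L1, L2, L3}"
proof -
  have "toric_line_of_type L1 0 1" "toric_line_of_type L2 (int n) 1" "toric_line_of_type L3 (int n) 2"
    using coprime1 coprime2 coprime3 by (auto simp: toric_line_of_type_iff)
  moreover have "\<not> (toric_line_of_type L1 a b \<and> toric_line_of_type L2 a b)" for a b
  proof
    assume ab: "toric_line_of_type L1 a b \<and> toric_line_of_type L2 a b"
    then have "0 * b - a * 1 = 0" "int n * b - a * 1 = 0"
      using toric_line_of_type_tline_det_eq_0 coprime1 coprime2 by blast+
    moreover have "coprime a b" using ab by (simp add: toric_line_of_type_iff)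
    ultimately show False using n_pos by simp
  qed
  ultimately show ?thesis by (auto simp: toric_arrangement_def toric_line_def)
qed

lemma exists_arrangement:
  "\<exists>A. toric_arrangement A \<and> card A = 3 \<and> card (arr_vertices A) = n \<and> card (arr_chambers A) = 2 * n"
proof (intro exI conjI)
  show "toric_arrangement {L1, L2, L3}" by (rule toric_arrangement_odd_construction)
  show "card {L1, L2, L3} = 3" using lines_distinct by simp
  show "card (arr_vertices {L1, L2, L3}) = n"
    using lines_distinct tline_subset_torus intersections_eq_vertex_set card_vertex_set
    by (subst arr_vertices_three) auto
  show "card (arr_chambers {L1, L2, L3}) = 2 * n"
    using card_chambers_odd_construction by (simp add: arr_chambers_def Un_assoc)
qed

end

lemma three_line_arrangementE:
  assumes "toric_arrangement A" "card A = 3"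
  obtains a1 b1 a2 b2 a3 b3 c1 c2 c3 where "three_lines a1 b1 a2 b2 a3 b3"
    "A = {tline a1 b1 c1, tline a2 b2 c2, tline a3 b3 c3}"
    "tline a1 b1 c1 \<noteq> tline a2 b2 c2" "tline a1 b1 c1 \<noteq> tline a3 b3 c3" "tline a2 b2 c2 \<noteq> tline a3 b3 c3"
proof -
  obtain X Y Z where A: "A = {X, Y, Z}" "X \<noteq> Y" "Y \<noteq> Z" "X \<noteq> Z"
    using assms(2) card_3_iff by metis
  then have "toric_line X" "toric_line Y" "toric_line Z"
    using assms(1) by (auto simp: toric_arrangement_def)
  then obtain a1 b1 c1 a2 b2 c2 a3 b3 c3 where
    lines: "coprime a1 b1" "X = tline a1 b1 c1" "coprime a2 b2" "Y = tline a2 b2 c2"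
      "coprime a3 b3" "Z = tline a3 b3 c3"
    unfolding toric_line_def toric_line_of_type_iff by metis
  have "a1 * b2 - a2 * b1 \<noteq> 0 \<or> a1 * b3 - a3 * b1 \<noteq> 0"
  proof (rule ccontr)
    assume "\<not> ?thesis"
    then have "\<forall>l\<in>A. toric_line_of_type l a1 b1"
      using lines toric_line_of_type_tline_if_det_eq_0 by (auto simp: A(1) toric_line_of_type_iff)
    then show False using assms(1) unfolding toric_arrangement_def by blast
  qed
  then show thesis
  proof
    assume "a1 * b2 - a2 * b1 \<noteq> 0"
    then have "three_lines a1 b1 a2 b2 a3 b3" using lines by unfold_locales
    then show thesis using that A lines by blast
  next
    assume "a1 * b3 - a3 * b1 \<noteq> 0"
    then have "three_lines a1 b1 a3 b3 a2 b2" using lines by unfold_locales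
    moreover have "A = {X, Z, Y}" using A(1) by auto
    ultimately show thesis using that A lines by metis
  qed
qed

theorem mainTheorem8:
  fixes f0 :: nat
  assumes "0 < f0"
  shows "(\<exists>A. toric_arrangement A \<and> card A = 3 \<and> card (arr_vertices A) = f0
             \<and> card (arr_chambers A) = 2 * f0) \<longleftrightarrow> odd f0"
proof
  assume "\<exists>A. toric_arrangement A \<and> card A = 3 \<and> card (arr_vertices A) = f0
             \<and> card (arr_chambers A) = 2 * f0"
  then obtain A where A: "toric_arrangement A" "card A = 3" "card (arr_vertices A) = f0"
    "card (arr_chambers A) = 2 * f0" by blast
  obtain a1 b1 a2 b2 a3 b3 c1 c2 c3 where "three_lines a1 b1 a2 b2 a3 b3"
    "A = {tline a1 b1 c1, tline a2 b2 c2, tline a3 b3 c3}"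
    "tline a1 b1 c1 \<noteq> tline a2 b2 c2" "tline a1 b1 c1 \<noteq> tline a3 b3 c3" "tline a2 b2 c2 \<noteq> tline a3 b3 c3"
    using three_line_arrangementE[OF A(1,2)] by blast
  then show "odd f0"
    using three_lines.odd_if_card_chambers_eq_twice_card_vertices A(3,4) assms by metis
next
  assume "odd f0"
  then interpret odd_construction f0 by unfold_locales
  show "\<exists>A. toric_arrangement A \<and> card A = 3 \<and> card (arr_vertices A) = f0
             \<and> card (arr_chambers A) = 2 * f0"
    by (rule exists_arrangement)
qed

end
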